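(* Let $(\mathcal G_s)_{s\ge0}$ be a filtration. For $s=1,\dots,t$ let $w_s\in\{0,1\}$ and $u_s\in\mathbb R^{d+2}$ be $\mathcal G_{s-1}$-measurable with $\|u_s\|_2^2\le R$ where $R\ge1$, and let $d_s\in\{0,1\}$ be $\mathcal G_s$-measurable with $\mathbb E[d_s\mid\mathcal G_{s-1}]=\mu(u_s'\theta^* )$ for some $\theta^*\in\Theta$. Assume $\Theta\subset\mathbb R^{d+2}$ is convex with $\|\theta\|_2\le L$ for all $\theta\in\Theta$, and $\mu$ is differentiable with $\dot\mu(u_s'\theta)\ge l_1>0$ for all $\theta\in\Theta$ and all $s$. Let $\hat\theta\in\arg\min_{\theta\in\Theta}\sum_{s=1}^tw_s\,l_s(\theta)$ with $l_s(\theta)=m(u_s'\theta)-d_su_s'\theta$, $m'=\mu$, let $V=I+\sum_{s=1}^tw_su_su_s'$ and $N=\sum_{s=1}^tw_s$. Then for any $\Delta\in(0,1)$, with probability at least $1-\Delta$, $$\|\hat\theta-\theta^*\|_V\le\frac{2\sqrt{(d+2)\log\big(1+NR^2/(d+2)\big)+2\log(1/\Delta)}+2l_1L}{l_1},$$ where $\|v\|_V=\sqrt{v'Vv}$.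
   Context: In the paper this is applied with $w_s=\mathbf 1(i_s=i)$ (individual data of product $i$) or $w_s=\mathbf 1(i_s\in\mathcal N_j)$ (pooled data of a cluster whose products share the parameter $\theta^*$), $u_s=(x_s',p_s)'$, and $R=2+\overline p^2$. *)

theory Defs
  imports "HOL-Probability.Probability"
begin

definition outer :: "real^'n \<Rightarrow> real^'n^'n" where
  "outer u = (\<chi> i j. u $ i * u $ j)"

definition Vnorm :: "real^'n^'n \<Rightarrow> real^'n \<Rightarrow> real" where
  "Vnorm V v = sqrt (v \<bullet> (V *v v))"

end

theory Submission
  imports Defs
begin

text \<open>Strong convexity of the weighted loss along the segment from \<open>\<theta>star\<close> to the minimiser
  \<open>\<theta>hat\<close> bounds \<open>l1 / 2 * \<Sum> w (u \<bullet> (\<theta>hat - \<theta>star))\<^sup>2\<close> by the noise term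
  \<open>\<Sum> w (d - \<mu> (u \<bullet> \<theta>star)) (u \<bullet> (\<theta>hat - \<theta>star))\<close>. For predictable \<open>c\<^sub>s\<close>, Hoeffding's lemma
  makes \<open>exp (\<Sum> c\<^sub>s (d\<^sub>s - p\<^sub>s) - c\<^sub>s\<^sup>2 / 8)\<close> a supermartingale. Averaging these over
  \<open>c\<^sub>s = y \<bullet> w\<^sub>s u\<^sub>s\<close> against a Gaussian density in \<open>y\<close> (the method of mixtures) and applying
  Markov's inequality gives, with probability \<open>1 - \<Delta>\<close>, a bound that holds simultaneously in all
  directions \<open>y\<close>; the Gaussian integral is bounded below by the product of the diagonal
  normalisations instead of a determinant. Taking \<open>y\<close> proportional to \<open>\<theta>hat - \<theta>star\<close> and solving
  the resulting quadratic inequality gives the bound.\<close>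

section \<open>Gaussian integrals of quadratic exponents\<close>

lemma nn_integral_exp_quadratic:
  fixes a K \<beta> :: real
  assumes a: "a > 0"
  shows "(\<integral>\<^sup>+y. ennreal (exp (K + \<beta> * y - a * y\<^sup>2 / 2)) \<partial>lborel)
         = ennreal (exp (K + \<beta>\<^sup>2 / (2 * a)) * sqrt (2 * pi / a))"
proof -
  define \<sigma> where "\<sigma> = 1 / sqrt a"
  have \<sigma>: "\<sigma> > 0" and \<sigma>2: "\<sigma>\<^sup>2 = 1 / a"
    using a by (simp_all add: \<sigma>_def power_divide)
  define c where "c = exp (K + \<beta>\<^sup>2 / (2 * a)) * sqrt (2 * pi / a)"
  have density: "exp (K + \<beta> * y - a * y\<^sup>2 / 2) = c * normal_density (\<beta> / a) \<sigma> y" for y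
  proof -
    have "K + \<beta> * y - a * y\<^sup>2 / 2 = (K + \<beta>\<^sup>2 / (2 * a)) + (- (y - \<beta> / a)\<^sup>2 / (2 * \<sigma>\<^sup>2))"
      unfolding \<sigma>2 using a by (simp add: field_simps power2_eq_square)
    then have "exp (K + \<beta> * y - a * y\<^sup>2 / 2)
        = exp (K + \<beta>\<^sup>2 / (2 * a)) * exp (- (y - \<beta> / a)\<^sup>2 / (2 * \<sigma>\<^sup>2))"
      by (simp only: exp_add)
    moreover have "c * normal_density (\<beta> / a) \<sigma> y = exp (K + \<beta>\<^sup>2 / (2 * a))
        * (sqrt (2 * pi / a) * (1 / sqrt (2 * pi * \<sigma>\<^sup>2))) * exp (- (y - \<beta> / a)\<^sup>2 / (2 * \<sigma>\<^sup>2))"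
      unfolding c_def normal_density_def by (simp only: mult_ac)
    moreover have "sqrt (2 * pi / a) * (1 / sqrt (2 * pi * \<sigma>\<^sup>2)) = 1"
      using a \<sigma>2 by (simp add: real_sqrt_divide)
    ultimately show ?thesis using a by simp
  qed
  have "(\<integral>\<^sup>+y. ennreal (exp (K + \<beta> * y - a * y\<^sup>2 / 2)) \<partial>lborel)
      = (\<integral>\<^sup>+y. ennreal c * ennreal (normal_density (\<beta> / a) \<sigma> y) \<partial>lborel)"
    unfolding density using a by (intro nn_integral_cong) (simp add: c_def ennreal_mult)
  also have "\<dots> = ennreal c * (\<integral>\<^sup>+y. ennreal (normal_density (\<beta> / a) \<sigma> y) \<partial>lborel)"
    by (rule nn_integral_cmult) simp
  also have "(\<integral>\<^sup>+y. ennreal (normal_density (\<beta> / a) \<sigma> y) \<partial>lborel) = 1"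
    using integral_normal_density[OF \<sigma>]
    by (subst nn_integral_eq_integral) (auto intro: integrable_normal_density[OF \<sigma>])
  finally show ?thesis unfolding c_def by simp
qed

definition lin_form :: "'n set \<Rightarrow> ('n \<Rightarrow> real) \<Rightarrow> ('n \<Rightarrow> real) \<Rightarrow> real" where
  "lin_form I b y = (\<Sum>i\<in>I. b i * y i)"

definition quad_form :: "'n set \<Rightarrow> ('n \<Rightarrow> 'n \<Rightarrow> real) \<Rightarrow> ('n \<Rightarrow> real) \<Rightarrow> real" where
  "quad_form I q y = (\<Sum>i\<in>I. \<Sum>j\<in>I. q i j * y i * y j)"

definition gaussian_exponent ::
    "'n set \<Rightarrow> real \<Rightarrow> ('n \<Rightarrow> real) \<Rightarrow> ('n \<Rightarrow> 'n \<Rightarrow> real) \<Rightarrow> ('n \<Rightarrow> real) \<Rightarrow> real" where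
  "gaussian_exponent I k b q y = k + lin_form I b y - quad_form I q y / 2"

definition schur_complement :: "('n \<Rightarrow> 'n \<Rightarrow> real) \<Rightarrow> 'n \<Rightarrow> 'n \<Rightarrow> 'n \<Rightarrow> real" where
  "schur_complement q i j l = q j l - q i j * q i l / q i i"

definition schur_linear :: "('n \<Rightarrow> real) \<Rightarrow> ('n \<Rightarrow> 'n \<Rightarrow> real) \<Rightarrow> 'n \<Rightarrow> 'n \<Rightarrow> real" where
  "schur_linear b q i j = b j - b i * q i j / q i i"

lemma borel_measurable_lin_form [measurable]:
  "lin_form I b \<in> borel_measurable (PiM I (\<lambda>_. lborel))"
  unfolding lin_form_def by measurable

lemma borel_measurable_quad_form [measurable]:
  "quad_form I q \<in> borel_measurable (PiM I (\<lambda>_. lborel))"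
  unfolding quad_form_def by measurable

lemma borel_measurable_gaussian_exponent [measurable]:
  "gaussian_exponent I k b q \<in> borel_measurable (PiM I (\<lambda>_. lborel))"
  unfolding gaussian_exponent_def by measurable

lemma lin_form_insert_update:
  assumes "finite I" "i \<notin> I"
  shows "lin_form (insert i I) b (x(i := z)) = b i * z + lin_form I b x"
proof -
  have "(\<Sum>j\<in>I. b j * (x(i := z)) j) = (\<Sum>j\<in>I. b j * x j)"
    using assms by (intro sum.cong) auto
  then show ?thesis using assms by (simp add: lin_form_def)
qed

lemma quad_form_insert_update:
  assumes "finite I" "i \<notin> I" and sym: "\<And>j. j \<in> I \<Longrightarrow> q j i = q i j"
  shows "quad_form (insert i I) q (x(i := z))
    = q i i * z\<^sup>2 + 2 * z * (\<Sum>j\<in>I. q i j * x j) + quad_form I q x"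
proof -
  let ?y = "x(i := z)"
  have y: "?y j = x j" if "j \<in> I" for j using assms that by auto
  have row: "(\<Sum>l\<in>insert i I. q j l * ?y j * ?y l) = q j i * ?y j * z + (\<Sum>l\<in>I. q j l * ?y j * x l)" for j
    using assms(1,2) y by (simp add: sum.insert)
  have "quad_form (insert i I) q ?y
      = (\<Sum>j\<in>insert i I. q j i * ?y j * z + (\<Sum>l\<in>I. q j l * ?y j * x l))"
    unfolding quad_form_def by (rule sum.cong[OF refl row])
  also have "\<dots> = q i i * z * z + (\<Sum>l\<in>I. q i l * z * x l)
      + ((\<Sum>j\<in>I. q i j * x j * z) + quad_form I q x)"
    using assms y unfolding quad_form_def by (simp add: sum.distrib)
  finally show ?thesis
    by (simp add: power2_eq_square sum_distrib_left sum_distrib_right algebra_simps)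
qed

lemma quad_form_indicator:
  assumes "finite I" "j \<in> I"
  shows "quad_form I q (\<lambda>l. if l = j then 1 else 0) = q j j"
proof -
  have "q i l * (if i = j then 1 else 0) * (if l = j then 1 else 0) = (if l = j then if i = j then q j j else 0 else 0)"
    for i l by auto
  then show ?thesis using assms by (simp add: quad_form_def)
qed

lemma coercive_diagonal_ge:
  assumes "finite I" "j \<in> I" and "\<forall>y. \<alpha> * (\<Sum>l\<in>I. (y l)\<^sup>2) \<le> quad_form I q y"
  shows "\<alpha> \<le> q j j"
proof -
  have "(\<Sum>l\<in>I. ((\<lambda>l. if l = j then 1 else 0 :: real) l)\<^sup>2) = (\<Sum>l\<in>I. if l = j then 1 else 0)"
    by (intro sum.cong) auto
  then show ?thesis
    using assms(3)[rule_format, of "\<lambda>l. if l = j then 1 else 0"] quad_form_indicator[OF assms(1,2)] assms(1,2)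
    by simp
qed

lemma quad_form_schur_complement:
  "quad_form I (schur_complement q i) y = quad_form I q y - (\<Sum>j\<in>I. q i j * y j)\<^sup>2 / q i i"
proof -
  have "quad_form I (schur_complement q i) y
      = quad_form I q y - (\<Sum>j\<in>I. \<Sum>l\<in>I. (q i j * y j) * (q i l * y l)) / q i i"
    unfolding quad_form_def schur_complement_def
    by (simp add: sum_subtractf sum_divide_distrib algebra_simps)
  then show ?thesis by (simp add: power2_eq_square sum_product)
qed

lemma lin_form_schur_linear:
  "lin_form I (schur_linear b q i) y = lin_form I b y - b i * (\<Sum>j\<in>I. q i j * y j) / q i i"
  unfolding lin_form_def schur_linear_def
  by (simp add: sum_subtractf sum_divide_distrib sum_distrib_left algebra_simps)

lemma schur_complement_diagonal_le:
  "q i i > 0 \<Longrightarrow> schur_complement q i j j \<le> q j j"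
  unfolding schur_complement_def by (simp add: power2_eq_square[symmetric])

lemma schur_complement_symmetric:
  "\<forall>j\<in>I. \<forall>l\<in>I. q j l = q l j \<Longrightarrow> i \<in> I \<Longrightarrow> \<forall>j\<in>I. \<forall>l\<in>I. schur_complement q i j l = schur_complement q i l j"
  unfolding schur_complement_def by (simp add: mult.commute)

lemma gaussian_exponent_insert_update:
  assumes "finite I" "i \<notin> I" and sym: "\<And>j. j \<in> I \<Longrightarrow> q j i = q i j" and a: "q i i \<noteq> 0"
  shows "gaussian_exponent (insert i I) k b q (x(i := z))
    = gaussian_exponent I (k + (b i)\<^sup>2 / (2 * q i i)) (schur_linear b q i) (schur_complement q i) x
      - (q i i * z - (b i - (\<Sum>j\<in>I. q i j * x j)))\<^sup>2 / (2 * q i i)"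
proof -
  define c where "c = (\<Sum>j\<in>I. q i j * x j)"
  have lhs: "gaussian_exponent (insert i I) k b q (x(i := z))
      = k + (b i * z + lin_form I b x) - (q i i * z\<^sup>2 + 2 * z * c + quad_form I q x) / 2"
    using lin_form_insert_update[OF assms(1,2)] quad_form_insert_update[where q=q, OF assms(1,2) sym]
    unfolding gaussian_exponent_def c_def by simp
  have rhs: "gaussian_exponent I (k + (b i)\<^sup>2 / (2 * q i i)) (schur_linear b q i) (schur_complement q i) x
      = k + (b i)\<^sup>2 / (2 * q i i) + (lin_form I b x - b i * c / q i i) - (quad_form I q x - c\<^sup>2 / q i i) / 2"
    unfolding gaussian_exponent_def lin_form_schur_linear quad_form_schur_complement c_def ..
  show ?thesis
    unfolding c_def[symmetric] lhs rhs using a by (simp add: field_simps power2_eq_square)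
qed

lemma schur_complement_coercive:
  assumes "finite I" "i \<notin> I" and sym: "\<And>j. j \<in> I \<Longrightarrow> q j i = q i j" and "\<alpha> \<ge> 0" and a: "q i i > 0"
    and coercive: "\<forall>y. \<alpha> * (\<Sum>j\<in>insert i I. (y j)\<^sup>2) \<le> quad_form (insert i I) q y"
  shows "\<forall>y. \<alpha> * (\<Sum>j\<in>I. (y j)\<^sup>2) \<le> quad_form I (schur_complement q i) y"
proof
  fix y
  define c where "c = (\<Sum>j\<in>I. q i j * y j)"
  define z where "z = - c / q i i"
  have "(\<Sum>j\<in>I. ((y(i := z)) j)\<^sup>2) = (\<Sum>j\<in>I. (y j)\<^sup>2)"
    using assms(2) by (intro sum.cong) auto
  then have "\<alpha> * (\<Sum>j\<in>I. (y j)\<^sup>2) \<le> \<alpha> * (\<Sum>j\<in>insert i I. ((y(i := z)) j)\<^sup>2)"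
    using assms(1,2) \<open>\<alpha> \<ge> 0\<close> by (simp add: mult_left_mono)
  also have "\<dots> \<le> quad_form (insert i I) q (y(i := z))"
    using coercive by blast
  also have "\<dots> = q i i * z\<^sup>2 + 2 * z * c + quad_form I q y"
    using quad_form_insert_update[where q=q, OF assms(1,2) sym] unfolding c_def by simp
  also have "\<dots> = quad_form I q y - c\<^sup>2 / q i i"
    unfolding z_def using a by (simp add: field_simps power2_eq_square)
  finally show "\<alpha> * (\<Sum>j\<in>I. (y j)\<^sup>2) \<le> quad_form I (schur_complement q i) y"
    unfolding quad_form_schur_complement c_def .
qed

lemma nn_integral_exp_gaussian_exponent_insert:
  assumes "finite I" "i \<notin> I" and sym: "\<And>j. j \<in> I \<Longrightarrow> q j i = q i j" and a: "q i i > 0"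
  shows "(\<integral>\<^sup>+y. ennreal (exp (gaussian_exponent (insert i I) k b q y)) \<partial>PiM (insert i I) (\<lambda>_. lborel))
    = ennreal (sqrt (2 * pi / q i i)) * (\<integral>\<^sup>+x. ennreal (exp (gaussian_exponent I
        (k + (b i)\<^sup>2 / (2 * q i i)) (schur_linear b q i) (schur_complement q i) x)) \<partial>PiM I (\<lambda>_. lborel))"
    (is "_ = _ * (\<integral>\<^sup>+x. ennreal (exp (?E x)) \<partial>_)")
proof -
  interpret product_sigma_finite "\<lambda>_. lborel" by standard
  have "(\<integral>\<^sup>+y. ennreal (exp (gaussian_exponent (insert i I) k b q y)) \<partial>PiM (insert i I) (\<lambda>_. lborel))
    = (\<integral>\<^sup>+x. (\<integral>\<^sup>+z. ennreal (exp (gaussian_exponent (insert i I) k b q (x(i := z)))) \<partial>lborel)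
        \<partial>PiM I (\<lambda>_. lborel))"
    by (rule product_nn_integral_insert[OF assms(1,2)]) measurable
  also have "\<dots> = (\<integral>\<^sup>+x. ennreal (sqrt (2 * pi / q i i)) * ennreal (exp (?E x)) \<partial>PiM I (\<lambda>_. lborel))"
  proof (rule nn_integral_cong)
    fix x
    define \<beta> where "\<beta> = b i - (\<Sum>j\<in>I. q i j * x j)"
    define E where "E = ?E x"
    have expo: "gaussian_exponent (insert i I) k b q (x(i := z))
        = (E - \<beta>\<^sup>2 / (2 * q i i)) + \<beta> * z - q i i * z\<^sup>2 / 2" for z
    proof -
      have "gaussian_exponent (insert i I) k b q (x(i := z)) = E - (q i i * z - \<beta>)\<^sup>2 / (2 * q i i)"
        using gaussian_exponent_insert_update[where q=q, OF assms(1,2) sym] a unfolding E_def \<beta>_def by simp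
      also have "\<dots> = (E - \<beta>\<^sup>2 / (2 * q i i)) + \<beta> * z - q i i * z\<^sup>2 / 2"
        using a by (simp add: field_simps power2_eq_square)
      finally show ?thesis .
    qed
    show "(\<integral>\<^sup>+z. ennreal (exp (gaussian_exponent (insert i I) k b q (x(i := z)))) \<partial>lborel)
        = ennreal (sqrt (2 * pi / q i i)) * ennreal (exp (?E x))"
      unfolding expo nn_integral_exp_quadratic[OF a] E_def[symmetric]
      by (simp add: ennreal_mult' mult.commute)
  qed
  also have "\<dots> = ennreal (sqrt (2 * pi / q i i)) * (\<integral>\<^sup>+x. ennreal (exp (?E x)) \<partial>PiM I (\<lambda>_. lborel))"
    by (rule nn_integral_cmult) measurable
  finally show ?thesis .
qed

text \<open>A determinant-free lower bound: integrating out one coordinate at a time passes to the Schur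
  complement, whose diagonal is dominated by that of \<open>q\<close>.\<close>
lemma nn_integral_exp_gaussian_exponent_ge:
  assumes "finite I" "\<alpha> > 0"
  shows "\<forall>j\<in>I. \<forall>l\<in>I. q j l = q l j \<Longrightarrow> \<forall>y. \<alpha> * (\<Sum>j\<in>I. (y j)\<^sup>2) \<le> quad_form I q y \<Longrightarrow>
    ennreal (exp (gaussian_exponent I k b q y0) * (\<Prod>j\<in>I. sqrt (2 * pi / q j j)))
      \<le> (\<integral>\<^sup>+y. ennreal (exp (gaussian_exponent I k b q y)) \<partial>PiM I (\<lambda>_. lborel))"
  using assms(1)
proof (induction I arbitrary: q b k y0 rule: finite_induct)
  case empty
  then show ?case by (simp add: gaussian_exponent_def lin_form_def quad_form_def PiM_empty)
next
  case (insert i I)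
  let ?q' = "schur_complement q i" and ?b' = "schur_linear b q i" and ?k' = "k + (b i)\<^sup>2 / (2 * q i i)"
  have sym: "\<And>j. j \<in> I \<Longrightarrow> q j i = q i j" using insert.prems(1) by blast
  have a: "q i i > 0"
    using coercive_diagonal_ge[OF _ _ insert.prems(2)] insert.hyps(1) \<open>\<alpha> > 0\<close> by force
  have coercive': "\<forall>y. \<alpha> * (\<Sum>j\<in>I. (y j)\<^sup>2) \<le> quad_form I ?q' y"
    using schur_complement_coercive[where q=q, OF insert.hyps sym _ a insert.prems(2)] \<open>\<alpha> > 0\<close> by simp
  have sym': "\<forall>j\<in>I. \<forall>l\<in>I. ?q' j l = ?q' l j"
    using schur_complement_symmetric[OF insert.prems(1)] by blast
  have diag: "0 \<le> sqrt (2 * pi / q j j) \<and> sqrt (2 * pi / q j j) \<le> sqrt (2 * pi / ?q' j j)" if "j \<in> I" for j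
  proof -
    have "0 < ?q' j j" using coercive_diagonal_ge[OF insert.hyps(1) that coercive'] \<open>\<alpha> > 0\<close> by simp
    with schur_complement_diagonal_le[of q i j] a show ?thesis by (simp add: frac_le)
  qed
  have "exp (gaussian_exponent (insert i I) k b q y0) \<le> exp (gaussian_exponent I ?k' ?b' ?q' y0)"
    using gaussian_exponent_insert_update[where q=q, OF insert.hyps sym, of k b y0 "y0 i"] a by simp
  moreover have "(\<Prod>j\<in>I. sqrt (2 * pi / q j j)) \<le> (\<Prod>j\<in>I. sqrt (2 * pi / ?q' j j))"
    using diag by (rule prod_mono)
  ultimately have "exp (gaussian_exponent (insert i I) k b q y0) * (\<Prod>j\<in>I. sqrt (2 * pi / q j j))
      \<le> exp (gaussian_exponent I ?k' ?b' ?q' y0) * (\<Prod>j\<in>I. sqrt (2 * pi / ?q' j j))"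
    using diag by (intro mult_mono) (auto intro: prod_nonneg)
  then have "sqrt (2 * pi / q i i) * (exp (gaussian_exponent (insert i I) k b q y0) * (\<Prod>j\<in>I. sqrt (2 * pi / q j j)))
      \<le> sqrt (2 * pi / q i i) * (exp (gaussian_exponent I ?k' ?b' ?q' y0) * (\<Prod>j\<in>I. sqrt (2 * pi / ?q' j j)))"
    using a by (intro mult_left_mono) auto
  then have "exp (gaussian_exponent (insert i I) k b q y0) * (\<Prod>j\<in>insert i I. sqrt (2 * pi / q j j))
      \<le> sqrt (2 * pi / q i i) * (exp (gaussian_exponent I ?k' ?b' ?q' y0) * (\<Prod>j\<in>I. sqrt (2 * pi / ?q' j j)))"
    using insert.hyps by (simp add: mult.left_commute)
  then have "ennreal (exp (gaussian_exponent (insert i I) k b q y0) * (\<Prod>j\<in>insert i I. sqrt (2 * pi / q j j)))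
      \<le> ennreal (sqrt (2 * pi / q i i)) * ennreal (exp (gaussian_exponent I ?k' ?b' ?q' y0) * (\<Prod>j\<in>I. sqrt (2 * pi / ?q' j j)))"
    using a by (simp add: ennreal_mult'[symmetric] ennreal_leI)
  also have "\<dots> \<le> ennreal (sqrt (2 * pi / q i i))
      * (\<integral>\<^sup>+x. ennreal (exp (gaussian_exponent I ?k' ?b' ?q' x)) \<partial>PiM I (\<lambda>_. lborel))"
    using insert.IH[OF sym' coercive'] by (rule mult_left_mono) simp
  finally show ?case by (simp only: nn_integral_exp_gaussian_exponent_insert[where q=q, OF insert.hyps sym a])
qed

section \<open>Gaussian mixtures of exponential weights\<close>

lemma power2_norm_vec: "(norm v)\<^sup>2 = (\<Sum>i\<in>UNIV. (v $ i)\<^sup>2)" for v :: "real^'n"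
  unfolding power2_norm_eq_inner inner_vec_def by (simp add: power2_eq_square)

lemma quad_form_identity_plus_outer:
  fixes u :: "nat \<Rightarrow> real^'n" and y :: "'n \<Rightarrow> real"
  shows "quad_form UNIV (\<lambda>i j. (mat 1 + (\<Sum>s\<in>S. w s *\<^sub>R outer (u s))) $ i $ j) y
    = (\<Sum>i\<in>UNIV. (y i)\<^sup>2) + (\<Sum>s\<in>S. w s * ((\<chi> i. y i) \<bullet> u s)\<^sup>2)"
proof -
  have entry: "(mat 1 + (\<Sum>s\<in>S. w s *\<^sub>R outer (u s))) $ i $ j
      = (if i = j then 1 else 0) + (\<Sum>s\<in>S. w s * (u s $ i * u s $ j))" for i j
    by (simp add: mat_def outer_def)
  have diagonal: "(\<Sum>i\<in>UNIV. \<Sum>j\<in>UNIV. (if i = j then 1 else 0) * y i * y j) = (\<Sum>i\<in>UNIV. (y i)\<^sup>2)"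
  proof -
    have "(if i = j then 1 else 0) * y i * y j = (if j = i then (y i)\<^sup>2 else 0)" for i j
      by (simp add: power2_eq_square)
    then show ?thesis by simp
  qed
  have outer: "(\<Sum>i\<in>UNIV. \<Sum>j\<in>UNIV. (\<Sum>s\<in>S. w s * (u s $ i * u s $ j)) * y i * y j)
      = (\<Sum>s\<in>S. w s * ((\<chi> i. y i) \<bullet> u s)\<^sup>2)"
  proof -
    have "(\<Sum>i\<in>UNIV. \<Sum>j\<in>UNIV. (\<Sum>s\<in>S. w s * (u s $ i * u s $ j)) * y i * y j)
        = (\<Sum>s\<in>S. w s * (\<Sum>i\<in>UNIV. \<Sum>j\<in>UNIV. (y i * u s $ i) * (y j * u s $ j)))"
      by (simp add: sum_distrib_left sum_distrib_right mult_ac sum.swap[of _ S])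
    then show ?thesis
      unfolding inner_vec_def power2_eq_square sum_product by simp
  qed
  show ?thesis
    unfolding quad_form_def entry distrib_right sum.distrib diagonal outer ..
qed

lemma quad_form_divide: "quad_form I (\<lambda>i j. q i j / c) y = quad_form I q y / c"
  unfolding quad_form_def by (simp add: sum_divide_distrib)

lemma prod_normal_density_mult_exp:
  fixes y :: "'n::finite \<Rightarrow> real"
  shows "(\<Prod>i\<in>UNIV. normal_density 0 2 (y i)) * exp (L - Q / 8)
    = exp ((\<Sum>i\<in>(UNIV :: 'n set). ln (1 / sqrt (8 * pi))) + L - ((\<Sum>i\<in>UNIV. (y i)\<^sup>2) + Q) / 4 / 2)"
proof -
  have "normal_density 0 2 z = exp (ln (1 / sqrt (8 * pi)) - z\<^sup>2 / 8)" for z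
  proof -
    have "exp (ln (1 / sqrt (8 * pi)) - z\<^sup>2 / 8) = exp (ln (1 / sqrt (8 * pi))) * exp (- (z\<^sup>2 / 8))"
      by (simp only: diff_conv_add_uminus exp_add)
    then show ?thesis unfolding normal_density_def by simp
  qed
  then have "(\<Prod>i\<in>UNIV. normal_density 0 2 (y i)) * exp (L - Q / 8)
      = exp ((\<Sum>i\<in>(UNIV :: 'n set). ln (1 / sqrt (8 * pi))) - (\<Sum>i\<in>UNIV. (y i)\<^sup>2) / 8) * exp (L - Q / 8)"
    by (simp add: exp_sum[symmetric] sum_subtractf sum_divide_distrib)
  also have "\<dots> = exp ((\<Sum>i\<in>(UNIV :: 'n set). ln (1 / sqrt (8 * pi))) - (\<Sum>i\<in>UNIV. (y i)\<^sup>2) / 8 + (L - Q / 8))"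
    by (rule exp_add[symmetric])
  finally show ?thesis by (simp add: field_simps)
qed

lemma normal_constant_mult_sqrt:
  "0 \<le> a \<Longrightarrow> 1 / sqrt (8 * pi) * sqrt (2 * pi / ((1 + a) / 4)) = 1 / sqrt (1 + a)"
proof -
  assume "0 \<le> a"
  then have "2 * pi / ((1 + a) / 4) = (8 * pi) / (1 + a)" by (simp add: field_simps)
  then show ?thesis by (simp add: real_sqrt_divide)
qed

definition mixture_martingale :: "(nat \<Rightarrow> real^'n) \<Rightarrow> (nat \<Rightarrow> real) \<Rightarrow> nat set \<Rightarrow> ennreal" where
  "mixture_martingale X \<xi> S = (\<integral>\<^sup>+y. ennreal ((\<Prod>i\<in>UNIV. normal_density 0 2 (y i))
    * exp (\<Sum>s\<in>S. ((\<chi> i. y i) \<bullet> X s) * \<xi> s - ((\<chi> i. y i) \<bullet> X s)\<^sup>2 / 8)) \<partial>PiM UNIV (\<lambda>_. lborel))"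

lemma gaussian_mixture_ge:
  fixes X :: "nat \<Rightarrow> real^'n" and \<xi> :: "nat \<Rightarrow> real" and y0 :: "real^'n"
  shows "ennreal (exp ((\<Sum>s\<in>S. (y0 \<bullet> X s) * \<xi> s) - ((norm y0)\<^sup>2 + (\<Sum>s\<in>S. (y0 \<bullet> X s)\<^sup>2)) / 8)
        * (\<Prod>i\<in>UNIV. 1 / sqrt (1 + (\<Sum>s\<in>S. (X s $ i)\<^sup>2))))
    \<le> mixture_martingale X \<xi> S"
proof -
  define A where "A i = (\<Sum>s\<in>S. (X s $ i)\<^sup>2)" for i
  define b where "b i = (\<Sum>s\<in>S. \<xi> s * X s $ i)" for i
  define q where "q i j = (mat 1 + (\<Sum>s\<in>S. 1 *\<^sub>R outer (X s))) $ i $ j / 4" for i j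
  define k where "k = (\<Sum>i\<in>(UNIV :: 'n set). ln (1 / sqrt (8 * pi)))"
  have lin: "lin_form UNIV b y = (\<Sum>s\<in>S. ((\<chi> i. y i) \<bullet> X s) * \<xi> s)" for y
    unfolding lin_form_def b_def inner_vec_def
    by (simp add: sum_distrib_left sum_distrib_right mult_ac sum.swap[of _ S])
  have quad: "quad_form UNIV q y = ((\<Sum>i\<in>UNIV. (y i)\<^sup>2) + (\<Sum>s\<in>S. ((\<chi> i. y i) \<bullet> X s)\<^sup>2)) / 4" for y
    unfolding q_def quad_form_divide quad_form_identity_plus_outer by simp
  have integrand: "(\<Prod>i\<in>UNIV. normal_density 0 2 (y i))
      * exp (\<Sum>s\<in>S. ((\<chi> i. y i) \<bullet> X s) * \<xi> s - ((\<chi> i. y i) \<bullet> X s)\<^sup>2 / 8)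
      = exp (gaussian_exponent UNIV k b q y)" for y
    using prod_normal_density_mult_exp[of y "lin_form UNIV b y" "\<Sum>s\<in>S. ((\<chi> i. y i) \<bullet> X s)\<^sup>2"]
    unfolding gaussian_exponent_def quad k_def lin by (simp add: sum_subtractf sum_divide_distrib)
  have sym: "\<forall>j\<in>UNIV. \<forall>l\<in>UNIV. q j l = q l j"
    by (simp add: q_def mat_def outer_def mult.commute)
  have coercive: "\<forall>y. 1 / 4 * (\<Sum>j\<in>UNIV. (y j)\<^sup>2) \<le> quad_form UNIV q y"
    unfolding quad by (auto intro: sum_nonneg)
  have qii: "q i i = (1 + A i) / 4" for i
    by (simp add: q_def A_def mat_def outer_def power2_eq_square)
  have "1 / sqrt (8 * pi) * sqrt (2 * pi / q i i) = 1 / sqrt (1 + A i)" for i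
    unfolding qii by (rule normal_constant_mult_sqrt) (simp add: A_def sum_nonneg)
  moreover have "exp k = (\<Prod>i\<in>(UNIV :: 'n set). 1 / sqrt (8 * pi))"
    unfolding k_def by (subst exp_sum) simp_all
  ultimately have diagonal: "exp k * (\<Prod>i\<in>UNIV. sqrt (2 * pi / q i i)) = (\<Prod>i\<in>UNIV. 1 / sqrt (1 + A i))"
    by (simp only: prod.distrib[symmetric])
  have "gaussian_exponent UNIV k b q (\<lambda>i. y0 $ i)
      = k + ((\<Sum>s\<in>S. (y0 \<bullet> X s) * \<xi> s) - ((norm y0)\<^sup>2 + (\<Sum>s\<in>S. (y0 \<bullet> X s)\<^sup>2)) / 8)"
  proof -
    have "(\<chi> i. y0 $ i) = y0" by (simp add: vec_eq_iff)
    then show ?thesis unfolding gaussian_exponent_def lin quad power2_norm_vec by simp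
  qed
  then have "exp ((\<Sum>s\<in>S. (y0 \<bullet> X s) * \<xi> s) - ((norm y0)\<^sup>2 + (\<Sum>s\<in>S. (y0 \<bullet> X s)\<^sup>2)) / 8)
        * (\<Prod>i\<in>UNIV. 1 / sqrt (1 + A i))
      = exp (gaussian_exponent UNIV k b q (\<lambda>i. y0 $ i)) * (\<Prod>i\<in>UNIV. sqrt (2 * pi / q i i))"
    unfolding diagonal[symmetric] by (simp add: exp_add mult_ac)
  also have "ennreal \<dots> \<le> (\<integral>\<^sup>+y. ennreal (exp (gaussian_exponent UNIV k b q y)) \<partial>PiM UNIV (\<lambda>_. lborel))"
    by (rule nn_integral_exp_gaussian_exponent_ge[OF _ _ sym coercive]) simp_all
  finally show ?thesis unfolding mixture_martingale_def A_def integrand .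
qed

section \<open>An exponential supermartingale for Bernoulli observations\<close>

lemma bernoulli_mgf_le:
  fixes c p :: real
  assumes "0 \<le> p" "p \<le> 1"
  shows "exp (- c * p) * (1 + p * (exp c - 1)) \<le> exp (c\<^sup>2 / 8)"
proof -
  have nonneg: "exp (- h * r) * (1 + r * (exp h - 1)) \<le> exp (h\<^sup>2 / 8)"
    if "h \<ge> 0" "0 \<le> r" "r \<le> 1" for h r :: real
  proof -
    have "1 + r * (exp h - 1) > 0"
      using that by (intro add_pos_nonneg mult_nonneg_nonneg) auto
    then have "exp (- h * r) * (1 + r * (exp h - 1)) = exp (- h * r + ln (1 + r * (exp h - 1)))"
      by (simp only: exp_add exp_ln)
    also have "\<dots> \<le> exp (h\<^sup>2 / 8)"
      using Hoeffdings_lemma_aux[of h r] that by simp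
    finally show ?thesis .
  qed
  show ?thesis
  proof (cases "c \<ge> 0")
    case True
    with nonneg assms show ?thesis by blast
  next
    case False
    have "exp (- (- c) * (1 - p)) * (1 + (1 - p) * (exp (- c) - 1)) = exp (- c * p) * (1 + p * (exp c - 1))"
      by (simp add: exp_diff exp_minus field_simps)
    with nonneg[of "- c" "1 - p"] False assms show ?thesis by simp
  qed
qed

lemma integrable_mult_AE_bounded:
  fixes f g :: "'a \<Rightarrow> real"
  assumes "integrable M f" "g \<in> borel_measurable M" "AE x in M. \<bar>g x\<bar> \<le> K"
  shows "integrable M (\<lambda>x. f x * g x)"
proof (rule Bochner_Integration.integrable_bound)
  show "integrable M (\<lambda>x. K * f x)" using assms(1) by simp
  show "AE x in M. norm (f x * g x) \<le> norm (K * f x)"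
    using assms(3)
  proof eventually_elim
    case (elim x)
    then have "\<bar>f x\<bar> * \<bar>g x\<bar> \<le> \<bar>f x\<bar> * K" by (intro mult_left_mono) auto
    with elim show ?case by (simp add: abs_mult abs_of_nonneg[of K] mult.commute)
  qed
qed (use assms in \<open>auto dest: borel_measurable_integrable\<close>)

lemma sigma_finite_subalgebra_prob_space:
  assumes "prob_space M" "subalgebra M F"
  shows "sigma_finite_subalgebra M F"
proof -
  interpret prob_space M by fact
  show ?thesis
    by (rule finite_measure_subalgebra_is_sigma_finite)
      (use assms(2) in \<open>simp add: finite_measure_subalgebra_def finite_measure_subalgebra_axioms_def finite_measure_axioms\<close>)
qed

lemma AE_real_cond_exp_bernoulli:
  assumes "prob_space M" "subalgebra M F" "d \<in> borel_measurable M" "\<And>x. x \<in> space M \<Longrightarrow> d x \<in> {0, 1}"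
  shows "AE x in M. 0 \<le> real_cond_exp M F d x \<and> real_cond_exp M F d x \<le> 1"
proof -
  interpret prob_space M by fact
  interpret sigma_finite_subalgebra M F by (rule sigma_finite_subalgebra_prob_space[OF assms(1,2)])
  have d01: "0 \<le> d x" "d x \<le> 1" if "x \<in> space M" for x using assms(4)[OF that] by auto
  have "integrable M d"
    using d01 by (intro integrable_const_bound[where B = 1]) (auto intro: assms(3))
  then have "AE x in M. real_cond_exp M F d x \<le> real_cond_exp M F (\<lambda>x. 1) x"
    using d01 by (intro real_cond_exp_mono) auto
  moreover have "AE x in M. real_cond_exp M F (\<lambda>x. 1) x = 1"
    by (rule real_cond_exp_F_meas) auto
  moreover have "AE x in M. 0 \<le> real_cond_exp M F d x"
    using d01 by (intro real_cond_exp_pos) (auto intro: assms(3))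
  ultimately show ?thesis by eventually_elim auto
qed

lemma integral_mult_bernoulli_eq_cond_exp:
  fixes g d p :: "'a \<Rightarrow> real"
  assumes "prob_space M" and sub: "subalgebra M F"
    and g: "integrable M g" "g \<in> borel_measurable F"
    and d: "d \<in> borel_measurable M" "\<And>x. x \<in> space M \<Longrightarrow> d x \<in> {0, 1}"
    and p: "p \<in> borel_measurable F" "AE x in M. real_cond_exp M F d x = p x"
  shows "integrable M (\<lambda>x. g x * d x)" "integrable M (\<lambda>x. g x * p x)"
    and "(\<integral>x. g x * d x \<partial>M) = (\<integral>x. g x * p x \<partial>M)"
proof -
  interpret sigma_finite_subalgebra M F by (rule sigma_finite_subalgebra_prob_space[OF assms(1) sub])
  note [measurable] = measurable_from_subalg[OF sub p(1)] d(1)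
  have "AE x in M. \<bar>d x\<bar> \<le> 1"
    by (rule AE_I2) (use d(2) in fastforce)
  then show gd: "integrable M (\<lambda>x. g x * d x)"
    by (intro integrable_mult_AE_bounded[OF g(1)]) measurable
  have "AE x in M. 0 \<le> real_cond_exp M F d x \<and> real_cond_exp M F d x \<le> 1"
    by (rule AE_real_cond_exp_bernoulli[OF assms(1) sub d])
  with p(2) have "AE x in M. \<bar>p x\<bar> \<le> 1"
    by eventually_elim auto
  then show "integrable M (\<lambda>x. g x * p x)"
    by (intro integrable_mult_AE_bounded[OF g(1)]) measurable
  have "(\<integral>x. g x * d x \<partial>M) = (\<integral>x. g x * real_cond_exp M F d x \<partial>M)"
    using gd g(2) by (intro real_cond_exp_intg(2)[symmetric]) auto
  also have "\<dots> = (\<integral>x. g x * p x \<partial>M)"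
  proof (rule integral_cong_AE)
    show "AE x in M. g x * real_cond_exp M F d x = g x * p x"
      using p(2) by eventually_elim simp
  qed (use measurable_from_subalg[OF sub g(2)] in measurable, use measurable_from_subalg[OF sub g(2)] in measurable)
  finally show "(\<integral>x. g x * d x \<partial>M) = (\<integral>x. g x * p x \<partial>M)" .
qed

lemma exp_bernoulli_increment_eq:
  fixes c d p :: real
  assumes "d \<in> {0, 1}"
  shows "exp (c * (d - p) - c\<^sup>2 / 8) = exp (- c\<^sup>2 / 8 - c * p) * (1 + (exp c - 1) * d)"
proof -
  consider "d = 0" | "d = 1" using assms by auto
  then show ?thesis
  proof cases
    case 1
    then show ?thesis by (simp add: algebra_simps)
  next
    case 2
    have arg: "c * (1 - p) - c\<^sup>2 / 8 = (- c\<^sup>2 / 8 - c * p) + c" by (simp add: algebra_simps)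
    show ?thesis unfolding 2 arg exp_add by simp
  qed
qed

lemma exp_bernoulli_increment_mean_le:
  fixes c p :: real
  assumes "0 \<le> p" "p \<le> 1"
  shows "exp (- c\<^sup>2 / 8 - c * p) * (1 + (exp c - 1) * p) \<le> 1"
proof -
  have "exp (- c\<^sup>2 / 8 - c * p) * (1 + (exp c - 1) * p)
      = exp (- c\<^sup>2 / 8) * (exp (- c * p) * (1 + p * (exp c - 1)))"
    unfolding diff_conv_add_uminus exp_add by (simp add: mult_ac exp_minus)
  also have "\<dots> \<le> exp (- c\<^sup>2 / 8) * exp (c\<^sup>2 / 8)"
    using bernoulli_mgf_le[OF assms] by (rule mult_left_mono) simp
  finally show ?thesis by (simp add: exp_minus)
qed

lemma exp_bernoulli_weight_le:
  fixes c p B :: real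
  assumes "\<bar>c\<bar> \<le> B" "0 \<le> p" "p \<le> 1"
  shows "exp (- c\<^sup>2 / 8 - c * p) \<le> exp B"
proof -
  have "- c\<^sup>2 / 8 - c * p \<le> \<bar>c\<bar> * \<bar>p\<bar>"
    using abs_ge_minus_self[of "c * p"] zero_le_power2[of c] unfolding abs_mult by linarith
  also have "\<dots> \<le> B * 1" using assms by (intro mult_mono) auto
  finally show ?thesis by simp
qed

lemma integrable_mult_exp_bernoulli_weight:
  fixes f c p :: "'a \<Rightarrow> real"
  assumes "integrable M f" "c \<in> borel_measurable M" "p \<in> borel_measurable M"
    and c: "\<And>x. x \<in> space M \<Longrightarrow> \<bar>c x\<bar> \<le> B" and p: "AE x in M. 0 \<le> p x \<and> p x \<le> 1"
  shows "integrable M (\<lambda>x. f x * exp (- (c x)\<^sup>2 / 8 - c x * p x))"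
    and "integrable M (\<lambda>x. f x * exp (- (c x)\<^sup>2 / 8 - c x * p x) * (exp (c x) - 1))"
proof -
  note [measurable] = assms(2,3)
  have "AE x in M. \<bar>exp (- (c x)\<^sup>2 / 8 - c x * p x)\<bar> \<le> exp B"
    using p AE_space
  proof eventually_elim
    case (elim x)
    then show ?case using exp_bernoulli_weight_le[OF c[of x]] by simp
  qed
  then show fe: "integrable M (\<lambda>x. f x * exp (- (c x)\<^sup>2 / 8 - c x * p x))"
    by (rule integrable_mult_AE_bounded[OF assms(1), rotated]) measurable
  have "\<bar>exp (c x) - 1\<bar> \<le> exp B" if "x \<in> space M" for x
  proof -
    have "exp (c x) \<le> exp B" "1 \<le> exp B" using c[OF that] by auto
    then show ?thesis using exp_gt_zero[of "c x"] by linarith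
  qed
  then show "integrable M (\<lambda>x. f x * exp (- (c x)\<^sup>2 / 8 - c x * p x) * (exp (c x) - 1))"
    by (intro integrable_mult_AE_bounded[OF fe] AE_I2) measurable
qed

text \<open>One step of the exponential supermartingale: since \<open>d\<close> is \<open>{0, 1}\<close>-valued, the increment is
  affine in \<open>d\<close>, so conditioning on \<open>F\<close> replaces \<open>d\<close> by \<open>p\<close>, and Hoeffding's lemma for a
  Bernoulli variable bounds the result.\<close>
lemma integral_mult_exp_bernoulli_le:
  fixes f c d p :: "'a \<Rightarrow> real"
  assumes "prob_space M" and sub: "subalgebra M F"
    and f: "integrable M f" "f \<in> borel_measurable F" "\<And>x. x \<in> space M \<Longrightarrow> 0 \<le> f x"
    and c: "c \<in> borel_measurable F" "\<And>x. x \<in> space M \<Longrightarrow> \<bar>c x\<bar> \<le> B"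
    and d: "d \<in> borel_measurable M" "\<And>x. x \<in> space M \<Longrightarrow> d x \<in> {0, 1}"
    and p: "p \<in> borel_measurable F" "AE x in M. real_cond_exp M F d x = p x"
  shows "integrable M (\<lambda>x. f x * exp (c x * (d x - p x) - (c x)\<^sup>2 / 8))"
    and "(\<integral>x. f x * exp (c x * (d x - p x) - (c x)\<^sup>2 / 8) \<partial>M) \<le> (\<integral>x. f x \<partial>M)"
proof -
  interpret prob_space M by fact
  note [measurable] = f(2) c(1) p(1) measurable_from_subalg[OF sub f(2)]
    measurable_from_subalg[OF sub c(1)] measurable_from_subalg[OF sub p(1)] d(1)
  have "AE x in M. 0 \<le> real_cond_exp M F d x \<and> real_cond_exp M F d x \<le> 1"
    by (rule AE_real_cond_exp_bernoulli[OF assms(1) sub d])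
  with p(2) have p01: "AE x in M. 0 \<le> p x \<and> p x \<le> 1"
    by eventually_elim auto
  define e where "e x = exp (- (c x)\<^sup>2 / 8 - c x * p x)" for x
  define g where "g x = f x * e x * (exp (c x) - 1)" for x
  have [measurable]: "e \<in> borel_measurable F" "g \<in> borel_measurable F"
    "e \<in> borel_measurable M" "g \<in> borel_measurable M"
    unfolding e_def g_def by measurable
  note integrable = integrable_mult_exp_bernoulli_weight[OF f(1) measurable_from_subalg[OF sub c(1)]
      measurable_from_subalg[OF sub p(1)] c(2) p01, folded e_def]
  note fe = integrable(1)
  have "integrable M g"
    unfolding g_def by (rule integrable(2))
  note g = integral_mult_bernoulli_eq_cond_exp[OF assms(1) sub this _ d p]
  have split: "f x * exp (c x * (d x - p x) - (c x)\<^sup>2 / 8) = f x * e x + g x * d x" if "x \<in> space M" for x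
    unfolding e_def g_def exp_bernoulli_increment_eq[OF d(2)[OF that]] by (simp add: algebra_simps)
  show "integrable M (\<lambda>x. f x * exp (c x * (d x - p x) - (c x)\<^sup>2 / 8))"
    by (rule integrable_cong_AE_imp[OF _ _ AE_I2[OF split[symmetric]]]) (use fe g(1) in simp_all)
  have "(\<integral>x. f x * exp (c x * (d x - p x) - (c x)\<^sup>2 / 8) \<partial>M) = (\<integral>x. f x * e x + g x * d x \<partial>M)"
    by (rule Bochner_Integration.integral_cong[OF refl split])
  also have "\<dots> = (\<integral>x. f x * e x + g x * p x \<partial>M)"
    using fe g by simp
  also have "\<dots> \<le> (\<integral>x. f x \<partial>M)"
  proof (rule integral_mono_AE)
    show "AE x in M. f x * e x + g x * p x \<le> f x"
      using p01 AE_space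
    proof eventually_elim
      case (elim x)
      have "f x * e x + g x * p x = f x * (e x * (1 + (exp (c x) - 1) * p x))"
        unfolding g_def by (simp add: algebra_simps)
      also have "\<dots> \<le> f x * 1"
        using exp_bernoulli_increment_mean_le elim f(3) unfolding e_def by (intro mult_left_mono) auto
      finally show ?case by simp
    qed
  qed (use fe g f(1) in auto)
  finally show "(\<integral>x. f x * exp (c x * (d x - p x) - (c x)\<^sup>2 / 8) \<partial>M) \<le> (\<integral>x. f x \<partial>M)" .
qed

lemma borel_measurable_filtration_mono:
  assumes sub: "\<And>s. subalgebra M (G s)" and mono: "\<And>s. sets (G s) \<subseteq> sets (G (Suc s))"
    and "a \<le> b" "f \<in> borel_measurable (G a)"
  shows "f \<in> borel_measurable (G b)"
proof (rule measurable_from_subalg[OF _ assms(4)])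
  show "subalgebra (G b) (G a)"
    using lift_Suc_mono_le[of "\<lambda>s. sets (G s)", OF mono \<open>a \<le> b\<close>] sub[of a] sub[of b]
    unfolding subalgebra_def by auto
qed

lemma nn_integral_exp_bernoulli_martingale_le_1:
  fixes c d p :: "nat \<Rightarrow> 'a \<Rightarrow> real"
  assumes "prob_space M"
    and sub: "\<And>s. subalgebra M (G s)" and mono: "\<And>s. sets (G s) \<subseteq> sets (G (Suc s))"
    and c: "\<And>s. s \<in> {1..t} \<Longrightarrow> c s \<in> borel_measurable (G (s - 1))"
      "\<And>s x. s \<in> {1..t} \<Longrightarrow> x \<in> space M \<Longrightarrow> \<bar>c s x\<bar> \<le> B"
    and d: "\<And>s. s \<in> {1..t} \<Longrightarrow> d s \<in> borel_measurable (G s)"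
      "\<And>s x. s \<in> {1..t} \<Longrightarrow> x \<in> space M \<Longrightarrow> d s x \<in> {0, 1}"
    and p: "\<And>s. s \<in> {1..t} \<Longrightarrow> p s \<in> borel_measurable (G (s - 1))"
      "\<And>s. s \<in> {1..t} \<Longrightarrow> AE x in M. real_cond_exp M (G (s - 1)) (d s) x = p s x"
  shows "(\<integral>\<^sup>+x. ennreal (exp (\<Sum>s=1..t. c s x * (d s x - p s x) - (c s x)\<^sup>2 / 8)) \<partial>M) \<le> 1"
proof -
  interpret prob_space M by fact
  define E where "E k x = exp (\<Sum>s=1..k. c s x * (d s x - p s x) - (c s x)\<^sup>2 / 8)" for k x
  have "E k \<in> borel_measurable (G k) \<and> integrable M (E k) \<and> (\<integral>x. E k x \<partial>M) \<le> 1" if "k \<le> t" for k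
    using that
  proof (induction k)
    case 0
    then show ?case by (simp add: E_def prob_space)
  next
    case (Suc k)
    then have s: "Suc k \<in> {1..t}" and IH: "E k \<in> borel_measurable (G k)" "integrable M (E k)" "(\<integral>x. E k x \<partial>M) \<le> 1"
      by auto
    have cG: "c (Suc k) \<in> borel_measurable (G k)" and pG: "p (Suc k) \<in> borel_measurable (G k)"
      and pAE: "AE x in M. real_cond_exp M (G k) (d (Suc k)) x = p (Suc k) x"
      using c(1)[OF s] p(1)[OF s] p(2)[OF s] by simp_all
    have [measurable]: "d (Suc k) \<in> borel_measurable (G (Suc k))" "E k \<in> borel_measurable (G (Suc k))"
      using d(1)[OF s] borel_measurable_filtration_mono[OF sub mono _ IH(1)] by auto
    note [measurable] = cG pG borel_measurable_filtration_mono[OF sub mono _ cG]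
      borel_measurable_filtration_mono[OF sub mono _ pG]
    have E_Suc: "E (Suc k) x = E k x * exp (c (Suc k) x * (d (Suc k) x - p (Suc k) x) - (c (Suc k) x)\<^sup>2 / 8)" for x
      unfolding E_def by (simp add: exp_add)
    have "0 \<le> E k x" for x by (simp add: E_def)
    note step = integral_mult_exp_bernoulli_le[OF assms(1) sub IH(2,1) this cG c(2)[OF s]
        measurable_from_subalg[OF sub d(1)[OF s]] d(2)[OF s] pG pAE]
    have "(\<lambda>x. E k x * exp (c (Suc k) x * (d (Suc k) x - p (Suc k) x) - (c (Suc k) x)\<^sup>2 / 8))
        \<in> borel_measurable (G (Suc k))"
      by measurable
    with step IH(3) show ?case
      unfolding E_Suc[abs_def] by (auto intro: order_trans)
  qed
  from this[of t] show ?thesis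
    unfolding E_def by (simp add: nn_integral_eq_integral ennreal_leI)
qed

section \<open>The self-normalised bound\<close>

lemma sum_ln_one_plus_le:
  fixes A :: "'i \<Rightarrow> real"
  assumes "finite I" "I \<noteq> {}" and A: "\<And>i. i \<in> I \<Longrightarrow> 0 \<le> A i"
  shows "(\<Sum>i\<in>I. ln (1 + A i)) \<le> card I * ln (1 + (\<Sum>i\<in>I. A i) / card I)"
proof -
  define n where "n = real (card I)"
  have n: "n > 0" using assms(1,2) by (simp add: n_def card_gt_0_iff)
  define m where "m = 1 + (\<Sum>i\<in>I. A i) / n"
  have m: "m > 0" unfolding m_def using n A by (simp add: add_pos_nonneg sum_nonneg)
  have "ln (1 + A i) - ln m \<le> (1 + A i) / m - 1" if "i \<in> I" for i
  proof -
    have "ln ((1 + A i) / m) \<le> (1 + A i) / m - 1"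
      using A[OF that] m by (intro ln_le_minus_one) simp
    then show ?thesis using A[OF that] m by (simp add: ln_div)
  qed
  then have "(\<Sum>i\<in>I. ln (1 + A i) - ln m) \<le> (\<Sum>i\<in>I. (1 + A i) / m - 1)"
    by (rule sum_mono)
  also have "\<dots> = (\<Sum>i\<in>I. 1 + A i) / m - n"
    unfolding sum_subtractf sum_divide_distrib n_def by simp
  also have "(\<Sum>i\<in>I. 1 + A i) = n * m"
    unfolding sum.distrib m_def n_def using n by (simp add: n_def field_simps)
  finally have "(\<Sum>i\<in>I. ln (1 + A i)) - n * ln m \<le> 0"
    using m by (simp add: sum_subtractf n_def)
  then show ?thesis unfolding m_def n_def by simp
qed

lemma nn_integral_mixture_le_1:
  fixes f :: "'a \<Rightarrow> 'b \<Rightarrow> ennreal"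
  assumes "sigma_finite_measure M" "sigma_finite_measure N"
    and f: "(\<lambda>(x, y). f x y) \<in> borel_measurable (M \<Otimes>\<^sub>M N)"
    and f_le: "\<And>y. y \<in> space N \<Longrightarrow> (\<integral>\<^sup>+x. f x y \<partial>M) \<le> \<rho> y"
    and \<rho>: "(\<integral>\<^sup>+y. \<rho> y \<partial>N) \<le> 1"
  shows "(\<integral>\<^sup>+x. (\<integral>\<^sup>+y. f x y \<partial>N) \<partial>M) \<le> 1"
proof -
  interpret pair_sigma_finite M N
    by (intro pair_sigma_finite.intro assms(1,2))
  have "(\<integral>\<^sup>+x. (\<integral>\<^sup>+y. f x y \<partial>N) \<partial>M) = (\<integral>\<^sup>+y. (\<integral>\<^sup>+x. f x y \<partial>M) \<partial>N)"
    using Fubini'[OF f] by simp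
  also have "\<dots> \<le> (\<integral>\<^sup>+y. \<rho> y \<partial>N)"
    using f_le by (rule nn_integral_mono)
  finally show ?thesis using \<rho> by simp
qed

lemma ex_event_Markov:
  fixes W :: "'a \<Rightarrow> ennreal"
  assumes "prob_space M" "W \<in> borel_measurable M" "(\<integral>\<^sup>+x. W x \<partial>M) \<le> 1" "0 < \<Delta>"
  shows "\<exists>A\<in>sets M. 1 - \<Delta> \<le> measure M A \<and> (\<forall>x\<in>A. ennreal \<Delta> * W x < 1)"
proof -
  interpret prob_space M by fact
  define B where "B = {x \<in> space M. 1 \<le> ennreal \<Delta> * W x}"
  have B: "B \<in> sets M" unfolding B_def using assms(2) by measurable
  have "emeasure M B \<le> ennreal \<Delta> * (\<integral>\<^sup>+x. W x * indicator (space M) x \<partial>M)"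
    unfolding B_def using assms(2) by (intro nn_integral_Markov_inequality) auto
  also have "(\<integral>\<^sup>+x. W x * indicator (space M) x \<partial>M) = (\<integral>\<^sup>+x. W x \<partial>M)"
    by (rule nn_integral_cong) simp
  also have "ennreal \<Delta> * \<dots> \<le> ennreal \<Delta> * 1"
    using assms(3) by (rule mult_left_mono) simp
  finally have "measure M B \<le> \<Delta>"
    using assms(4) by (simp add: emeasure_eq_measure)
  then have "1 - \<Delta> \<le> measure M (space M - B)"
    using prob_compl[OF B] by simp
  moreover have "\<forall>x\<in>space M - B. ennreal \<Delta> * W x < 1"
    unfolding B_def by (auto simp: not_le)
  ultimately show ?thesis using B by blast
qed

lemma lt_ln_of_mixture_ge:
  fixes A :: "'i \<Rightarrow> real"
  assumes "ennreal \<Delta> * W < 1" "ennreal (exp v * (\<Prod>i\<in>I. 1 / sqrt (1 + A i))) \<le> W"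
    and "0 < \<Delta>" "finite I" "\<And>i. i \<in> I \<Longrightarrow> 0 \<le> A i"
  shows "v < ln (1 / \<Delta>) + (\<Sum>i\<in>I. ln (1 + A i)) / 2"
proof -
  define P where "P = (\<Prod>i\<in>I. 1 / sqrt (1 + A i))"
  have pos: "0 < 1 + A i" if "i \<in> I" for i using assms(5)[OF that] by simp
  then have P: "P > 0" unfolding P_def by (auto intro: prod_pos)
  have "ennreal (\<Delta> * (exp v * P)) < 1"
    using assms(1,3) order.strict_trans1[OF mult_left_mono[OF assms(2)]]
    unfolding P_def by (simp add: ennreal_mult')
  then have "ln (\<Delta> * (exp v * P)) < 0"
    using assms(3) P by (intro ln_less_zero) (simp_all add: ennreal_less_one_iff)
  moreover have "ln P = - (\<Sum>i\<in>I. ln (1 + A i)) / 2"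
  proof -
    have "ln P = (\<Sum>i\<in>I. ln (1 / sqrt (1 + A i)))"
      unfolding P_def using assms(4) pos by (intro ln_prod) (auto simp: less_le)
    also have "\<dots> = (\<Sum>i\<in>I. - ln (1 + A i) / 2)"
      using assms(5) by (intro sum.cong refl) (simp add: ln_div ln_sqrt pos)
    finally show ?thesis by (simp add: sum_negf sum_divide_distrib)
  qed
  ultimately show ?thesis
    using assms(3) P by (simp add: ln_mult ln_div)
qed

lemma nn_integral_prod_normal_density:
  "(\<integral>\<^sup>+y. ennreal (\<Prod>i\<in>UNIV. normal_density 0 2 (y i)) \<partial>PiM (UNIV :: 'n::finite set) (\<lambda>_. lborel)) = 1"
proof -
  interpret product_sigma_finite "\<lambda>_::'n. lborel :: real measure" by standard
  have "(\<integral>\<^sup>+y. ennreal (\<Prod>i\<in>UNIV. normal_density 0 2 (y i)) \<partial>PiM (UNIV :: 'n set) (\<lambda>_. lborel))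
      = (\<integral>\<^sup>+y. (\<Prod>i\<in>UNIV. ennreal (normal_density 0 2 (y i))) \<partial>PiM (UNIV :: 'n set) (\<lambda>_. lborel))"
    by (simp add: prod_ennreal)
  also have "\<dots> = (\<Prod>i\<in>(UNIV :: 'n set). \<integral>\<^sup>+z. ennreal (normal_density 0 2 z) \<partial>lborel)"
    by (rule product_nn_integral_prod) auto
  also have "\<dots> = 1"
    by (simp add: nn_integral_eq_integral integrable_normal_density integral_normal_density)
  finally show ?thesis .
qed

lemma borel_measurable_mixture_martingale_integrand:
  fixes X :: "nat \<Rightarrow> 'a \<Rightarrow> real^'n"
  assumes "\<And>s. s \<in> S \<Longrightarrow> X s \<in> borel_measurable M" "\<And>s. s \<in> S \<Longrightarrow> \<xi> s \<in> borel_measurable M"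
  shows "(\<lambda>(x, y). ennreal ((\<Prod>i\<in>UNIV. normal_density 0 2 (y i))
      * exp (\<Sum>s\<in>S. ((\<chi> i. y i) \<bullet> X s x) * \<xi> s x - ((\<chi> i. y i) \<bullet> X s x)\<^sup>2 / 8)))
    \<in> borel_measurable (M \<Otimes>\<^sub>M PiM UNIV (\<lambda>_. lborel))"
proof -
  have "(\<lambda>z. \<Sum>s\<in>S. ((\<chi> i. snd z i) \<bullet> X s (fst z)) * \<xi> s (fst z) - ((\<chi> i. snd z i) \<bullet> X s (fst z))\<^sup>2 / 8)
      \<in> borel_measurable (M \<Otimes>\<^sub>M PiM UNIV (\<lambda>_. lborel))"
  proof (rule borel_measurable_sum)
    fix s assume "s \<in> S"
    note [measurable] = assms[OF this] borel_measurable_nth[measurable (raw)]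
    show "(\<lambda>z. ((\<chi> i. snd z i) \<bullet> X s (fst z)) * \<xi> s (fst z) - ((\<chi> i. snd z i) \<bullet> X s (fst z))\<^sup>2 / 8)
        \<in> borel_measurable (M \<Otimes>\<^sub>M PiM UNIV (\<lambda>_. lborel))"
      unfolding inner_vec_def vec_lambda_beta by measurable
  qed
  then show ?thesis unfolding case_prod_beta by measurable
qed

lemma nn_integral_mixture_martingale_le_1:
  fixes X :: "nat \<Rightarrow> 'a \<Rightarrow> real^'n" and d p :: "nat \<Rightarrow> 'a \<Rightarrow> real"
  assumes "prob_space M"
    and sub: "\<And>s. subalgebra M (G s)" and mono: "\<And>s. sets (G s) \<subseteq> sets (G (Suc s))"
    and X: "\<And>s. s \<in> {1..t} \<Longrightarrow> X s \<in> borel_measurable (G (s - 1))"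
      "\<And>s x. s \<in> {1..t} \<Longrightarrow> x \<in> space M \<Longrightarrow> norm (X s x) \<le> K"
    and d: "\<And>s. s \<in> {1..t} \<Longrightarrow> d s \<in> borel_measurable (G s)"
      "\<And>s x. s \<in> {1..t} \<Longrightarrow> x \<in> space M \<Longrightarrow> d s x \<in> {0, 1}"
    and p: "\<And>s. s \<in> {1..t} \<Longrightarrow> p s \<in> borel_measurable (G (s - 1))"
      "\<And>s. s \<in> {1..t} \<Longrightarrow> AE x in M. real_cond_exp M (G (s - 1)) (d s) x = p s x"
  shows "(\<lambda>x. mixture_martingale (\<lambda>s. X s x) (\<lambda>s. d s x - p s x) {1..t}) \<in> borel_measurable M"
    and "(\<integral>\<^sup>+x. mixture_martingale (\<lambda>s. X s x) (\<lambda>s. d s x - p s x) {1..t} \<partial>M) \<le> 1"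
proof -
  interpret prob_space M by fact
  interpret \<Lambda>: product_sigma_finite "\<lambda>_::'n. lborel :: real measure" by standard
  have \<Lambda>: "sigma_finite_measure (PiM (UNIV :: 'n set) (\<lambda>_. lborel :: real measure))"
    by (rule \<Lambda>.sigma_finite) simp
  note [measurable] = measurable_from_subalg[OF sub X(1)] measurable_from_subalg[OF sub d(1)]
    measurable_from_subalg[OF sub p(1)]
  note joint = borel_measurable_mixture_martingale_integrand[of "{1..t}" X M "\<lambda>s x. d s x - p s x"]
  show "(\<lambda>x. mixture_martingale (\<lambda>s. X s x) (\<lambda>s. d s x - p s x) {1..t}) \<in> borel_measurable M"
    unfolding mixture_martingale_def
    using sigma_finite_measure.borel_measurable_nn_integral[OF \<Lambda> joint] by simp
  show "(\<integral>\<^sup>+x. mixture_martingale (\<lambda>s. X s x) (\<lambda>s. d s x - p s x) {1..t} \<partial>M) \<le> 1"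
    unfolding mixture_martingale_def
  proof (rule nn_integral_mixture_le_1[OF sigma_finite_measure_axioms \<Lambda>])
    show "(\<integral>\<^sup>+y. ennreal (\<Prod>i\<in>UNIV. normal_density 0 2 (y i)) \<partial>PiM (UNIV :: 'n set) (\<lambda>_. lborel)) \<le> 1"
      by (simp add: nn_integral_prod_normal_density)
    fix y :: "'n \<Rightarrow> real"
    have "(\<integral>\<^sup>+x. ennreal (exp (\<Sum>s=1..t. ((\<chi> i. y i) \<bullet> X s x) * (d s x - p s x) - ((\<chi> i. y i) \<bullet> X s x)\<^sup>2 / 8)) \<partial>M) \<le> 1"
    proof (rule nn_integral_exp_bernoulli_martingale_le_1[OF assms(1) sub mono _ _ d p])
      fix s x assume s: "s \<in> {1..t}" and x: "x \<in> space M"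
      have "\<bar>(\<chi> i. y i) \<bullet> X s x\<bar> \<le> norm (\<chi> i. y i) * norm (X s x)" by (rule Cauchy_Schwarz_ineq2)
      also have "\<dots> \<le> norm (\<chi> i. y i) * K" using X(2)[OF s x] by (intro mult_left_mono) auto
      finally show "\<bar>(\<chi> i. y i) \<bullet> X s x\<bar> \<le> norm (\<chi> i. y i) * K" .
    qed (use X(1) in measurable)
    then show "(\<integral>\<^sup>+x. ennreal ((\<Prod>i\<in>UNIV. normal_density 0 2 (y i))
        * exp (\<Sum>s=1..t. ((\<chi> i. y i) \<bullet> X s x) * (d s x - p s x) - ((\<chi> i. y i) \<bullet> X s x)\<^sup>2 / 8)) \<partial>M)
      \<le> ennreal (\<Prod>i\<in>UNIV. normal_density 0 2 (y i))"
      using mult_left_mono[of _ 1 "ennreal (\<Prod>i\<in>UNIV. normal_density 0 2 (y i))"]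
      by (simp add: ennreal_mult' nn_integral_cmult prod_nonneg)
  qed (use joint in simp)
qed

lemma self_normalized_bound:
  fixes X :: "nat \<Rightarrow> 'a \<Rightarrow> real^'n" and d p :: "nat \<Rightarrow> 'a \<Rightarrow> real"
  assumes "prob_space M"
    and sub: "\<And>s. subalgebra M (G s)" and mono: "\<And>s. sets (G s) \<subseteq> sets (G (Suc s))"
    and X: "\<And>s. s \<in> {1..t} \<Longrightarrow> X s \<in> borel_measurable (G (s - 1))"
      "\<And>s x. s \<in> {1..t} \<Longrightarrow> x \<in> space M \<Longrightarrow> norm (X s x) \<le> K"
    and d: "\<And>s. s \<in> {1..t} \<Longrightarrow> d s \<in> borel_measurable (G s)"
      "\<And>s x. s \<in> {1..t} \<Longrightarrow> x \<in> space M \<Longrightarrow> d s x \<in> {0, 1}"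
    and p: "\<And>s. s \<in> {1..t} \<Longrightarrow> p s \<in> borel_measurable (G (s - 1))"
      "\<And>s. s \<in> {1..t} \<Longrightarrow> AE x in M. real_cond_exp M (G (s - 1)) (d s) x = p s x"
    and "0 < \<Delta>"
  shows "\<exists>A\<in>sets M. 1 - \<Delta> \<le> measure M A \<and> (\<forall>x\<in>A. \<forall>y.
    (\<Sum>s=1..t. (y \<bullet> X s x) * (d s x - p s x)) - ((norm y)\<^sup>2 + (\<Sum>s=1..t. (y \<bullet> X s x)\<^sup>2)) / 8
      < ln (1 / \<Delta>) + real CARD('n) / 2 * ln (1 + (\<Sum>s=1..t. (norm (X s x))\<^sup>2) / real CARD('n)))"
proof -
  note W = nn_integral_mixture_martingale_le_1[OF assms(1-9)]
  obtain A where A: "A \<in> sets M" "1 - \<Delta> \<le> measure M A"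
    and W_lt: "\<forall>x\<in>A. ennreal \<Delta> * mixture_martingale (\<lambda>s. X s x) (\<lambda>s. d s x - p s x) {1..t} < 1"
    using ex_event_Markov[OF assms(1) W \<open>0 < \<Delta>\<close>] by blast
  show ?thesis
  proof (intro bexI[OF _ A(1)] conjI A(2) ballI allI)
    fix x y assume x: "x \<in> A"
    define a where "a i = (\<Sum>s=1..t. (X s x $ i)\<^sup>2)" for i
    have a0: "0 \<le> a i" for i unfolding a_def by (simp add: sum_nonneg)
    have "(\<Sum>s=1..t. (y \<bullet> X s x) * (d s x - p s x)) - ((norm y)\<^sup>2 + (\<Sum>s=1..t. (y \<bullet> X s x)\<^sup>2)) / 8
        < ln (1 / \<Delta>) + (\<Sum>i\<in>UNIV. ln (1 + a i)) / 2"
      using W_lt x gaussian_mixture_ge a0 \<open>0 < \<Delta>\<close> unfolding a_def by (intro lt_ln_of_mixture_ge) auto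
    also have "(\<Sum>i\<in>UNIV. ln (1 + a i)) \<le> real CARD('n) * ln (1 + (\<Sum>i\<in>UNIV. a i) / real CARD('n))"
      using sum_ln_one_plus_le[of UNIV a] a0 by simp
    also have "(\<Sum>i\<in>UNIV. a i) = (\<Sum>s=1..t. (norm (X s x))\<^sup>2)"
      unfolding a_def power2_norm_vec by (rule sum.swap)
    finally show "(\<Sum>s=1..t. (y \<bullet> X s x) * (d s x - p s x)) - ((norm y)\<^sup>2 + (\<Sum>s=1..t. (y \<bullet> X s x)\<^sup>2)) / 8
        < ln (1 / \<Delta>) + real CARD('n) / 2 * ln (1 + (\<Sum>s=1..t. (norm (X s x))\<^sup>2) / real CARD('n))"
      by simp
  qed
qed

section \<open>The estimation error\<close>

lemma taylor_lower_bound_deriv_ge: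
  fixes m \<mu> :: "real \<Rightarrow> real" and a b l :: real
  assumes m: "\<And>z. (m has_real_derivative \<mu> z) (at z)" and \<mu>: "\<And>z. \<mu> differentiable (at z)"
    and \<mu>_deriv: "\<And>r. 0 \<le> r \<Longrightarrow> r \<le> 1 \<Longrightarrow> l \<le> deriv \<mu> (a + r * b)"
  shows "l * b\<^sup>2 / 2 \<le> m (a + b) - m a - \<mu> a * b"
proof -
  define \<phi> where "\<phi> r = m (a + r * b) - r * (\<mu> a * b) - l * r\<^sup>2 * b\<^sup>2 / 2" for r
  have D\<mu>: "DERIV (\<lambda>r. \<mu> (a + r * b)) r :> deriv \<mu> (a + r * b) * b" for r
    using \<mu> by (intro DERIV_chain2[of \<mu>]) (auto simp: DERIV_deriv_iff_real_differentiable intro!: derivative_eq_intros)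
  have D\<phi>: "DERIV \<phi> r :> \<mu> (a + r * b) * b - \<mu> a * b - l * r * b\<^sup>2" for r
    unfolding \<phi>_def by (rule derivative_eq_intros DERIV_chain2[OF m] refl | simp)+
  have slope: "0 \<le> \<mu> (a + r * b) * b - \<mu> a * b - l * r * b\<^sup>2" if "0 \<le> r" "r \<le> 1" for r
  proof (cases "r = 0")
    case False
    with that have "0 < r" by simp
    then obtain z where z: "0 < z" "z < r" "\<mu> (a + r * b) - \<mu> (a + 0 * b) = (r - 0) * (deriv \<mu> (a + z * b) * b)"
      using MVT2[of 0 r "\<lambda>r. \<mu> (a + r * b)" "\<lambda>r. deriv \<mu> (a + r * b) * b"] D\<mu> by blast
    have "r * b\<^sup>2 * l \<le> r * b\<^sup>2 * deriv \<mu> (a + z * b)"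
      using \<mu>_deriv[of z] z that by (intro mult_left_mono) auto
    then show ?thesis using z(3) by (simp add: power2_eq_square algebra_simps)
  qed simp
  have "\<phi> 0 \<le> \<phi> 1"
  proof (rule DERIV_nonneg_imp_nondecreasing[of 0 1 \<phi>])
    fix r :: real assume "0 \<le> r" "r \<le> 1"
    then show "\<exists>y. DERIV \<phi> r :> y \<and> 0 \<le> y" using D\<phi> slope by blast
  qed simp
  then show ?thesis unfolding \<phi>_def by simp
qed

lemma minimiser_quadratic_le_noise:
  fixes u :: "nat \<Rightarrow> real^'n" and w d :: "nat \<Rightarrow> real" and \<theta>s \<theta>h :: "real^'n"
  assumes w: "\<And>s. s \<in> S \<Longrightarrow> 0 \<le> w s"
    and m: "\<And>z. (m has_real_derivative \<mu> z) (at z)" and \<mu>: "\<And>z. \<mu> differentiable (at z)"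
    and \<mu>_deriv: "\<And>s \<theta>. s \<in> S \<Longrightarrow> \<theta> \<in> \<Theta> \<Longrightarrow> l \<le> deriv \<mu> (u s \<bullet> \<theta>)"
    and "convex \<Theta>" "\<theta>s \<in> \<Theta>" "\<theta>h \<in> \<Theta>"
    and min: "(\<Sum>s\<in>S. w s * (m (u s \<bullet> \<theta>h) - d s * (u s \<bullet> \<theta>h)))
      \<le> (\<Sum>s\<in>S. w s * (m (u s \<bullet> \<theta>s) - d s * (u s \<bullet> \<theta>s)))"
  shows "l / 2 * (\<Sum>s\<in>S. w s * (u s \<bullet> (\<theta>h - \<theta>s))\<^sup>2)
    \<le> (\<Sum>s\<in>S. w s * (d s - \<mu> (u s \<bullet> \<theta>s)) * (u s \<bullet> (\<theta>h - \<theta>s)))"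
proof -
  define a where "a s = u s \<bullet> \<theta>s" for s
  define b where "b s = u s \<bullet> (\<theta>h - \<theta>s)" for s
  have ab: "u s \<bullet> \<theta>h = a s + b s" for s unfolding a_def b_def by (simp add: inner_diff_right)
  have "l * (b s)\<^sup>2 / 2 \<le> m (a s + b s) - m (a s) - \<mu> (a s) * b s" if s: "s \<in> S" for s
  proof (rule taylor_lower_bound_deriv_ge[OF m \<mu>])
    fix r :: real assume "0 \<le> r" "r \<le> 1"
    then have "(1 - r) *\<^sub>R \<theta>s + r *\<^sub>R \<theta>h \<in> \<Theta>"
      using \<open>convex \<Theta>\<close> \<open>\<theta>s \<in> \<Theta>\<close> \<open>\<theta>h \<in> \<Theta>\<close> by (intro convexD) auto
    moreover have "u s \<bullet> ((1 - r) *\<^sub>R \<theta>s + r *\<^sub>R \<theta>h) = a s + r * b s"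
      unfolding a_def b_def by (simp add: inner_add_right inner_diff_right algebra_simps)
    ultimately show "l \<le> deriv \<mu> (a s + r * b s)" using \<mu>_deriv[OF s] by metis
  qed
  then have "(\<Sum>s\<in>S. w s * (l * (b s)\<^sup>2 / 2)) \<le> (\<Sum>s\<in>S. w s * (m (a s + b s) - m (a s) - \<mu> (a s) * b s))"
    by (intro sum_mono mult_left_mono w)
  also have "\<dots> = ((\<Sum>s\<in>S. w s * (m (u s \<bullet> \<theta>h) - d s * (u s \<bullet> \<theta>h)))
      - (\<Sum>s\<in>S. w s * (m (u s \<bullet> \<theta>s) - d s * (u s \<bullet> \<theta>s))))
      + (\<Sum>s\<in>S. w s * (d s - \<mu> (u s \<bullet> \<theta>s)) * (u s \<bullet> (\<theta>h - \<theta>s)))"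
    unfolding sum_subtractf[symmetric] sum.distrib[symmetric] ab
    by (rule sum.cong) (auto simp: a_def b_def algebra_simps)
  finally show ?thesis
    using min unfolding b_def by (simp add: sum_distrib_left mult_ac)
qed

lemma le_sqrt_of_forall_quadratic_lt:
  fixes S X C :: real
  assumes "0 \<le> X" and lt: "\<And>a. a * S - a\<^sup>2 * X\<^sup>2 / 8 < C"
  shows "S \<le> X * sqrt (C / 2)"
proof -
  have C: "C > 0" using lt[of 0] by simp
  consider "S \<le> 0" | "0 < S" "X = 0" | "0 < S" "0 < X" using \<open>0 \<le> X\<close> by linarith
  then show ?thesis
  proof cases
    case 1
    moreover have "0 \<le> X * sqrt (C / 2)" using C \<open>0 \<le> X\<close> by simp
    ultimately show ?thesis by linarith
  next
    case 2
    then show ?thesis using lt[of "C / S"] by simp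
  next
    case 3
    then have X: "X > 0" by auto
    define a where "a = 4 * S / X\<^sup>2"
    have "a * S - a\<^sup>2 * X\<^sup>2 / 8 = 2 * S\<^sup>2 / X\<^sup>2"
      unfolding a_def using X by (simp add: field_simps power2_eq_square)
    with lt[of a] have "2 * S\<^sup>2 / X\<^sup>2 < C" by linarith
    then have "2 * S\<^sup>2 < C * X\<^sup>2" using X by (simp add: pos_divide_less_eq)
    then have "S\<^sup>2 < X\<^sup>2 * (C / 2)" by (simp add: mult.commute)
    also have "\<dots> = (X * sqrt (C / 2))\<^sup>2" using C by (simp add: power_mult_distrib)
    finally have "S\<^sup>2 < (X * sqrt (C / 2))\<^sup>2" .
    then have "S < X * sqrt (C / 2)" by (rule power2_less_imp_less) (use X C in simp)
    then show ?thesis by simp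
  qed
qed

lemma le_of_power2_le_linear:
  fixes X \<beta> c :: real
  assumes "0 \<le> \<beta>" "0 \<le> c" "X\<^sup>2 \<le> c\<^sup>2 + \<beta> * X"
  shows "X \<le> \<beta> + c"
proof (rule ccontr)
  assume "\<not> X \<le> \<beta> + c"
  then have "X * X > X * (\<beta> + c)" "X * c \<ge> c * c"
    using assms by (auto intro!: mult_strict_left_mono mult_right_mono)
  then show False using assms(3) by (simp add: power2_eq_square algebra_simps)
qed

lemma estimator_quadratic_bound:
  fixes X V Q N C l L :: real
  assumes "0 \<le> X" "X\<^sup>2 = V + Q" "V \<le> (2 * L)\<^sup>2" "0 \<le> L" "0 < l" "0 < C"
    and "l / 2 * Q \<le> N" "N \<le> X * sqrt (C / 2)"
  shows "X \<le> (sqrt (2 * C) + 2 * l * L) / l"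
proof -
  have "l / 2 * Q \<le> X * sqrt (C / 2)" using assms(7,8) by linarith
  then have "Q \<le> 2 * sqrt (C / 2) / l * X"
    using \<open>0 < l\<close> by (simp add: field_simps)
  also have "2 * sqrt (C / 2) = sqrt (2 * C)"
    using real_sqrt_mult[of 4 "C / 2"] by simp
  finally have "X\<^sup>2 \<le> (2 * L)\<^sup>2 + sqrt (2 * C) / l * X"
    using assms(2,3) by linarith
  then have "X \<le> sqrt (2 * C) / l + 2 * L"
    using le_of_power2_le_linear[of "sqrt (2 * C) / l" "2 * L" X] assms(4-6) by simp
  then show ?thesis
    using \<open>0 < l\<close> by (simp add: add_divide_distrib)
qed

lemma quad_form_matrix: "v \<bullet> (A *v v) = quad_form UNIV (\<lambda>i j. A $ i $ j) (\<lambda>i. v $ i)"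
  unfolding quad_form_def inner_vec_def matrix_vector_mult_def
  by (simp add: sum_distrib_left mult_ac)

lemma Vnorm_identity_plus_outer:
  fixes u :: "nat \<Rightarrow> real^'n"
  shows "Vnorm (mat 1 + (\<Sum>s\<in>S. w s *\<^sub>R outer (u s))) v = sqrt ((norm v)\<^sup>2 + (\<Sum>s\<in>S. w s * (u s \<bullet> v)\<^sup>2))"
proof -
  have "(\<chi> i. v $ i) = v" by (simp add: vec_eq_iff)
  then show ?thesis
    unfolding Vnorm_def quad_form_matrix quad_form_identity_plus_outer power2_norm_vec
    by (simp add: inner_commute)
qed

lemma estimator_error_le:
  fixes u :: "nat \<Rightarrow> real^'n" and w d :: "nat \<Rightarrow> real" and \<theta>s \<theta>h :: "real^'n"
  assumes w: "\<And>s. s \<in> S \<Longrightarrow> w s \<in> {0, 1}"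
    and m: "\<And>z. (m has_real_derivative \<mu> z) (at z)" and \<mu>: "\<And>z. \<mu> differentiable (at z)"
    and \<mu>_deriv: "\<And>s \<theta>. s \<in> S \<Longrightarrow> \<theta> \<in> \<Theta> \<Longrightarrow> l \<le> deriv \<mu> (u s \<bullet> \<theta>)" and "0 < l"
    and \<Theta>: "convex \<Theta>" "\<theta>s \<in> \<Theta>" "\<theta>h \<in> \<Theta>" and L: "\<And>\<theta>. \<theta> \<in> \<Theta> \<Longrightarrow> norm \<theta> \<le> L"
    and min: "(\<Sum>s\<in>S. w s * (m (u s \<bullet> \<theta>h) - d s * (u s \<bullet> \<theta>h)))
      \<le> (\<Sum>s\<in>S. w s * (m (u s \<bullet> \<theta>s) - d s * (u s \<bullet> \<theta>s)))"
    and noise: "\<And>y. (\<Sum>s\<in>S. (y \<bullet> (w s *\<^sub>R u s)) * (d s - \<mu> (u s \<bullet> \<theta>s)))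
      - ((norm y)\<^sup>2 + (\<Sum>s\<in>S. (y \<bullet> (w s *\<^sub>R u s))\<^sup>2)) / 8 < C"
  shows "Vnorm (mat 1 + (\<Sum>s\<in>S. w s *\<^sub>R outer (u s))) (\<theta>h - \<theta>s) \<le> (sqrt (2 * C) + 2 * l * L) / l"
proof -
  define v where "v = \<theta>h - \<theta>s"
  define Q where "Q = (\<Sum>s\<in>S. w s * (u s \<bullet> v)\<^sup>2)"
  define N where "N = (\<Sum>s\<in>S. w s * (d s - \<mu> (u s \<bullet> \<theta>s)) * (u s \<bullet> v))"
  define X where "X = Vnorm (mat 1 + (\<Sum>s\<in>S. w s *\<^sub>R outer (u s))) v"
  have w_sq: "(w s)\<^sup>2 = w s" and w0: "0 \<le> w s" if "s \<in> S" for s using w[OF that] by auto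
  have "0 \<le> Q" unfolding Q_def using w0 by (simp add: sum_nonneg)
  then have X: "X\<^sup>2 = (norm v)\<^sup>2 + Q" "0 \<le> X"
    unfolding X_def Vnorm_identity_plus_outer Q_def by simp_all
  have C: "0 < C" using noise[of 0] by simp
  have N: "N \<le> X * sqrt (C / 2)"
  proof (rule le_sqrt_of_forall_quadratic_lt[OF X(2)])
    fix a
    have "(\<Sum>s\<in>S. ((a *\<^sub>R v) \<bullet> (w s *\<^sub>R u s))\<^sup>2) = a\<^sup>2 * Q"
      unfolding Q_def sum_distrib_left
      by (intro sum.cong refl) (simp add: power_mult_distrib w_sq inner_commute)
    moreover have "(\<Sum>s\<in>S. ((a *\<^sub>R v) \<bullet> (w s *\<^sub>R u s)) * (d s - \<mu> (u s \<bullet> \<theta>s))) = a * N"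
      unfolding N_def sum_distrib_left by (intro sum.cong refl) (simp add: inner_commute)
    ultimately show "a * N - a\<^sup>2 * X\<^sup>2 / 8 < C"
      using noise[of "a *\<^sub>R v"] unfolding X(1) by (simp add: power_mult_distrib algebra_simps)
  qed
  moreover have "l / 2 * Q \<le> N"
    unfolding Q_def N_def v_def using minimiser_quadratic_le_noise[OF w0 m \<mu> \<mu>_deriv \<Theta> min] by simp
  moreover have "norm v \<le> 2 * L"
    using norm_triangle_ineq4[of "\<theta>h" "\<theta>s"] L[OF \<Theta>(2)] L[OF \<Theta>(3)] unfolding v_def by linarith
  then have "(norm v)\<^sup>2 \<le> (2 * L)\<^sup>2"
    by (rule power_mono) simp
  moreover have "0 \<le> L" using norm_ge_zero[of \<theta>s] L[OF \<Theta>(2)] by linarith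
  ultimately show ?thesis
    unfolding X_def[symmetric] v_def[symmetric] using X \<open>0 < l\<close> C by (intro estimator_quadratic_bound) auto
qed

lemma sum_norm_scaleR_indicator_le:
  fixes u :: "nat \<Rightarrow> 'v::real_normed_vector"
  assumes "\<And>s. s \<in> S \<Longrightarrow> w s \<in> {0, 1}" "\<And>s. s \<in> S \<Longrightarrow> (norm (u s))\<^sup>2 \<le> R" "1 \<le> R"
  shows "(\<Sum>s\<in>S. (norm (w s *\<^sub>R u s))\<^sup>2) \<le> (\<Sum>s\<in>S. w s) * R\<^sup>2"
proof -
  have "(norm (w s *\<^sub>R u s))\<^sup>2 \<le> w s * R\<^sup>2" if "s \<in> S" for s
  proof -
    have "R \<le> R\<^sup>2" using assms(3) by (simp add: power2_eq_square)
    then show ?thesis using assms(1,2)[OF that] by (auto simp: power_mult_distrib)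
  qed
  then show ?thesis by (simp add: sum_distrib_right sum_mono)
qed

lemma estimator_error_le_log_design:
  fixes u :: "nat \<Rightarrow> real^'n" and w d :: "nat \<Rightarrow> real" and \<theta>s \<theta>h :: "real^'n"
  assumes w: "\<And>s. s \<in> S \<Longrightarrow> w s \<in> {0, 1}"
    and u: "\<And>s. s \<in> S \<Longrightarrow> (norm (u s))\<^sup>2 \<le> R" and "1 \<le> R"
    and m: "\<And>z. (m has_real_derivative \<mu> z) (at z)" and \<mu>: "\<And>z. \<mu> differentiable (at z)"
    and \<mu>_deriv: "\<And>s \<theta>. s \<in> S \<Longrightarrow> \<theta> \<in> \<Theta> \<Longrightarrow> l \<le> deriv \<mu> (u s \<bullet> \<theta>)" and "0 < l"
    and \<Theta>: "convex \<Theta>" "\<theta>s \<in> \<Theta>" "\<theta>h \<in> \<Theta>" and L: "\<And>\<theta>. \<theta> \<in> \<Theta> \<Longrightarrow> norm \<theta> \<le> L"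
    and min: "(\<Sum>s\<in>S. w s * (m (u s \<bullet> \<theta>h) - d s * (u s \<bullet> \<theta>h)))
      \<le> (\<Sum>s\<in>S. w s * (m (u s \<bullet> \<theta>s) - d s * (u s \<bullet> \<theta>s)))"
    and noise: "\<And>y. (\<Sum>s\<in>S. (y \<bullet> (w s *\<^sub>R u s)) * (d s - \<mu> (u s \<bullet> \<theta>s)))
      - ((norm y)\<^sup>2 + (\<Sum>s\<in>S. (y \<bullet> (w s *\<^sub>R u s))\<^sup>2)) / 8
      < ln (1 / \<Delta>) + real CARD('n) / 2 * ln (1 + (\<Sum>s\<in>S. (norm (w s *\<^sub>R u s))\<^sup>2) / real CARD('n))"
  shows "Vnorm (mat 1 + (\<Sum>s\<in>S. w s *\<^sub>R outer (u s))) (\<theta>h - \<theta>s)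
    \<le> (2 * sqrt (real CARD('n) * ln (1 + (\<Sum>s\<in>S. w s) * R\<^sup>2 / real CARD('n)) + 2 * ln (1 / \<Delta>))
       + 2 * l * L) / l"
proof -
  define C where "C = ln (1 / \<Delta>) + real CARD('n) / 2 * ln (1 + (\<Sum>s\<in>S. (norm (w s *\<^sub>R u s))\<^sup>2) / real CARD('n))"
  define B where "B = real CARD('n) * ln (1 + (\<Sum>s\<in>S. w s) * R\<^sup>2 / real CARD('n)) + 2 * ln (1 / \<Delta>)"
  have "Vnorm (mat 1 + (\<Sum>s\<in>S. w s *\<^sub>R outer (u s))) (\<theta>h - \<theta>s) \<le> (sqrt (2 * C) + 2 * l * L) / l"
    using estimator_error_le[OF w m \<mu> \<mu>_deriv \<open>0 < l\<close> \<Theta> L min] noise unfolding C_def by blast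
  also have "\<dots> \<le> (2 * sqrt B + 2 * l * L) / l"
  proof -
    have "(\<Sum>s\<in>S. (norm (w s *\<^sub>R u s))\<^sup>2) \<le> (\<Sum>s\<in>S. w s) * R\<^sup>2"
      using w u \<open>1 \<le> R\<close> by (rule sum_norm_scaleR_indicator_le)
    moreover have "0 \<le> (\<Sum>s\<in>S. (norm (w s *\<^sub>R u s))\<^sup>2)" by (simp add: sum_nonneg)
    ultimately have "ln (1 + (\<Sum>s\<in>S. (norm (w s *\<^sub>R u s))\<^sup>2) / real CARD('n))
        \<le> ln (1 + (\<Sum>s\<in>S. w s) * R\<^sup>2 / real CARD('n))"
      by (subst ln_le_cancel_iff) (auto intro: add_pos_nonneg divide_right_mono)
    then have "2 * C \<le> B" unfolding B_def C_def by simp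
    moreover have "0 < C" using noise[of 0] unfolding C_def by simp
    ultimately have "sqrt (2 * C) \<le> sqrt B" "0 \<le> sqrt B"
      by (simp_all only: real_sqrt_le_mono real_sqrt_ge_zero)
    then have "sqrt (2 * C) + 2 * l * L \<le> 2 * sqrt B + 2 * l * L" by linarith
    then show ?thesis by (rule divide_right_mono) (use \<open>0 < l\<close> in simp)
  qed
  finally show ?thesis unfolding B_def .
qed

lemma self_normalized_bound_design:
  fixes w d :: "nat \<Rightarrow> 'a \<Rightarrow> real" and u :: "nat \<Rightarrow> 'a \<Rightarrow> real^'n"
  assumes "prob_space M"
    and sub: "\<And>s. subalgebra M (G s)" and mono: "\<And>s. sets (G s) \<subseteq> sets (G (Suc s))"
    and w: "\<And>s. s \<in> {1..t} \<Longrightarrow> w s \<in> borel_measurable (G (s - 1))"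
      "\<And>s x. s \<in> {1..t} \<Longrightarrow> x \<in> space M \<Longrightarrow> w s x \<in> {0, 1}"
    and u: "\<And>s. s \<in> {1..t} \<Longrightarrow> u s \<in> borel_measurable (G (s - 1))"
      "\<And>s x. s \<in> {1..t} \<Longrightarrow> x \<in> space M \<Longrightarrow> (norm (u s x))\<^sup>2 \<le> R"
    and d: "\<And>s. s \<in> {1..t} \<Longrightarrow> d s \<in> borel_measurable (G s)"
      "\<And>s x. s \<in> {1..t} \<Longrightarrow> x \<in> space M \<Longrightarrow> d s x \<in> {0, 1}"
    and \<mu>: "\<mu> \<in> borel_measurable borel"
    and cond_exp: "\<And>s. s \<in> {1..t} \<Longrightarrow> AE x in M. real_cond_exp M (G (s - 1)) (d s) x = \<mu> (u s x \<bullet> \<theta>)"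
    and "0 < \<Delta>"
  shows "\<exists>A\<in>sets M. 1 - \<Delta> \<le> measure M A \<and> (\<forall>x\<in>A. \<forall>y.
    (\<Sum>s=1..t. (y \<bullet> (w s x *\<^sub>R u s x)) * (d s x - \<mu> (u s x \<bullet> \<theta>)))
      - ((norm y)\<^sup>2 + (\<Sum>s=1..t. (y \<bullet> (w s x *\<^sub>R u s x))\<^sup>2)) / 8
    < ln (1 / \<Delta>) + real CARD('n) / 2 * ln (1 + (\<Sum>s=1..t. (norm (w s x *\<^sub>R u s x))\<^sup>2) / real CARD('n)))"
proof (rule self_normalized_bound[OF assms(1) sub mono _ _ d _ cond_exp \<open>0 < \<Delta>\<close>])
  fix s assume s: "s \<in> {1..t}"
  note [measurable] = w(1)[OF s] u(1)[OF s] \<mu>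
  show "(\<lambda>x. w s x *\<^sub>R u s x) \<in> borel_measurable (G (s - 1))" by measurable
  show "(\<lambda>x. \<mu> (u s x \<bullet> \<theta>)) \<in> borel_measurable (G (s - 1))" by measurable
  fix x assume x: "x \<in> space M"
  have "\<bar>w s x\<bar> \<le> 1" "norm (u s x) \<le> sqrt R"
    using w(2)[OF s x] u(2)[OF s x] by (auto simp: real_le_rsqrt)
  then show "norm (w s x *\<^sub>R u s x) \<le> sqrt R"
    using mult_mono[of "\<bar>w s x\<bar>" 1 "norm (u s x)" "sqrt R"] by simp
qed

theorem mainTheorem3:
  fixes M :: "'a measure"
    and G :: "nat \<Rightarrow> 'a measure"
    and t d :: nat
    and w dd :: "nat \<Rightarrow> 'a \<Rightarrow> real"
    and u :: "nat \<Rightarrow> 'a \<Rightarrow> real^'n"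
    and R L l1 \<Delta> :: real
    and \<mu> m :: "real \<Rightarrow> real"
    and \<Theta> :: "(real^'n) set"
    and \<theta>star :: "real^'n"
    and \<theta>hat :: "'a \<Rightarrow> real^'n"
  assumes "prob_space M"
    and filt_sub: "\<And>s. subalgebra M (G s)"
    and filt_mono: "\<And>s. sets (G s) \<subseteq> sets (G (Suc s))"
    and dim: "CARD('n) = d + 2"
    and w_meas: "\<And>s. s \<in> {1..t} \<Longrightarrow> w s \<in> borel_measurable (G (s - 1))"
    and w_01: "\<And>s x. s \<in> {1..t} \<Longrightarrow> x \<in> space M \<Longrightarrow> w s x \<in> {0, 1}"
    and u_meas: "\<And>s. s \<in> {1..t} \<Longrightarrow> u s \<in> borel_measurable (G (s - 1))"
    and u_bound: "\<And>s x. s \<in> {1..t} \<Longrightarrow> x \<in> space M \<Longrightarrow> (norm (u s x))\<^sup>2 \<le> R"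
    and R_ge: "R \<ge> 1"
    and d_meas: "\<And>s. s \<in> {1..t} \<Longrightarrow> dd s \<in> borel_measurable (G s)"
    and d_01: "\<And>s x. s \<in> {1..t} \<Longrightarrow> x \<in> space M \<Longrightarrow> dd s x \<in> {0, 1}"
    and cond_exp: "\<And>s. s \<in> {1..t} \<Longrightarrow>
        AE x in M. real_cond_exp M (G (s - 1)) (dd s) x = \<mu> (u s x \<bullet> \<theta>star)"
    and \<theta>star_in: "\<theta>star \<in> \<Theta>"
    and \<Theta>_convex: "convex \<Theta>"
    and \<Theta>_bound: "\<And>\<theta>. \<theta> \<in> \<Theta> \<Longrightarrow> norm \<theta> \<le> L"
    and \<mu>_diff: "\<And>z. \<mu> differentiable (at z)"
    and \<mu>_deriv: "\<And>s x \<theta>. s \<in> {1..t} \<Longrightarrow> x \<in> space M \<Longrightarrow> \<theta> \<in> \<Theta> \<Longrightarrow>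
        deriv \<mu> (u s x \<bullet> \<theta>) \<ge> l1"
    and l1_pos: "l1 > 0"
    and m_deriv: "\<And>z. (m has_real_derivative \<mu> z) (at z)"
    and \<theta>hat_in: "\<And>x. x \<in> space M \<Longrightarrow> \<theta>hat x \<in> \<Theta>"
    and \<theta>hat_min: "\<And>x \<theta>. x \<in> space M \<Longrightarrow> \<theta> \<in> \<Theta> \<Longrightarrow>
        (\<Sum>s=1..t. w s x * (m (u s x \<bullet> \<theta>hat x) - dd s x * (u s x \<bullet> \<theta>hat x)))
          \<le> (\<Sum>s=1..t. w s x * (m (u s x \<bullet> \<theta>) - dd s x * (u s x \<bullet> \<theta>)))"
    and \<Delta>_range: "0 < \<Delta>" "\<Delta> < 1"
  shows "\<exists>A \<in> sets M. measure M A \<ge> 1 - \<Delta> \<and>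
    (\<forall>x \<in> A.
      Vnorm (mat 1 + (\<Sum>s=1..t. w s x *\<^sub>R outer (u s x))) (\<theta>hat x - \<theta>star)
        \<le> (2 * sqrt (real (d + 2) * ln (1 + (\<Sum>s=1..t. w s x) * R\<^sup>2 / real (d + 2))
                     + 2 * ln (1 / \<Delta>))
           + 2 * l1 * L) / l1)"
proof -
  have "\<mu> \<in> borel_measurable borel"
    using \<mu>_diff by (intro borel_measurable_continuous_onI continuous_at_imp_continuous_on)
      (simp add: differentiable_imp_continuous_within)
  from self_normalized_bound_design[OF assms(1) filt_sub filt_mono w_meas w_01 u_meas u_bound d_meas d_01
      this cond_exp \<Delta>_range(1)]
  obtain A where A: "A \<in> sets M" "1 - \<Delta> \<le> measure M A" and noise: "\<forall>x\<in>A. \<forall>y.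
      (\<Sum>s=1..t. (y \<bullet> (w s x *\<^sub>R u s x)) * (dd s x - \<mu> (u s x \<bullet> \<theta>star)))
        - ((norm y)\<^sup>2 + (\<Sum>s=1..t. (y \<bullet> (w s x *\<^sub>R u s x))\<^sup>2)) / 8
      < ln (1 / \<Delta>) + real CARD('n) / 2 * ln (1 + (\<Sum>s=1..t. (norm (w s x *\<^sub>R u s x))\<^sup>2) / real CARD('n))"
    by blast
  show ?thesis
  proof (intro bexI[OF _ A(1)] conjI ballI A(2))
    fix x assume "x \<in> A"
    then have x: "x \<in> space M" using sets.sets_into_space[OF A(1)] by blast
    show "Vnorm (mat 1 + (\<Sum>s=1..t. w s x *\<^sub>R outer (u s x))) (\<theta>hat x - \<theta>star)
        \<le> (2 * sqrt (real (d + 2) * ln (1 + (\<Sum>s=1..t. w s x) * R\<^sup>2 / real (d + 2)) + 2 * ln (1 / \<Delta>))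
           + 2 * l1 * L) / l1"
      unfolding dim[symmetric]
      by (rule estimator_error_le_log_design[OF _ _ R_ge m_deriv \<mu>_diff _ l1_pos \<Theta>_convex \<theta>star_in
            \<theta>hat_in[OF x] \<Theta>_bound \<theta>hat_min[OF x \<theta>star_in]])
        (use w_01 u_bound \<mu>_deriv x noise \<open>x \<in> A\<close> in blast)+
  qed
qed

end
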